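(* Consider the abstract problem $u_{tt}+\mathcal Au+kD(u_t)=F(u)$, $u(0)=u_0\in\mathcal D(\mathcal A^{1/2})$, $u_t(0)=u_1\in H_0$, under Assumptions (AB1) and (AB2). Then the dynamical system $(\mathcal H,S_t)$ generated by it on $\mathcal H=\mathcal D(\mathcal A^{1/2})\times H_0$ is ultimately dissipative: there exists $R_0>0$ such that for every bounded set $B\subset\mathcal H$ there is $t_0=t_0(B)$ with $\|S_ty\|_{\mathcal H}\le R_0$ for all $y\in B$ and $t\ge t_0$. Moreover, there exists a bounded forward invariant absorbing set $\mathcal B_0\subset\mathcal H$.
   Context: $H_0$ is a real Hilbert space with inner product $(\cdot,\cdot)$ and norm $|\cdot|$; $\mathcal A$ is a closed positive self-adjoint operator on $H_0$; $\mathcal H=\mathcal D(\mathcal A^{1/2})\times H_0$ with $\|\{u,v\}\|_{\mathcal H}^2=|\mathcal A^{1/2}u|^2+|v|^2$; $k>0$ is a constant. Assumption (AB1): (i) $D:\mathcal D(\mathcal A^{1/2})\to[\mathcal D(\mathcal A^{1/2})]'$ is monotone and hemicontinuous with $D(0)=0$; (ii) $F:\mathcal D(\mathcal A^{1/2})\to H_0$ is locally Lipschitz and $F(u)=-\Pi'(u)+N(u)$, where $\Pi=\Pi_0+\Pi_1$ is a $C^1$ functional on $\mathcal D(\mathcal A^{1/2})$ with Fréchet derivative $\Pi'$, such that (a) $\Pi_0\ge0$ is bounded on bounded sets of $\mathcal D(\mathcal A^{1/2})$, (b) for every $\eta>0$ there is $c_\eta\ge0$ with $|\Pi_1(u)|\le\eta(|\mathcal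 A^{1/2}u|^2+\Pi_0(u))+c_\eta$ for all $u$; (iii) there are $c_1,c_2>0$ and $0\le k_0<k$ with $(N(u),v)\le c_1+c_2[\|\{u,v\}\|_{\mathcal H}^2+\Pi_0(u)]+k_0(D(v),v)$ for all $u,v\in\mathcal D(\mathcal A^{1/2})$. It is assumed that the problem is well posed in $\mathcal H$, generating a dynamical system $S_t\{u_0,u_1\}=\{u(t),u_t(t)\}$, whose solutions satisfy $\mathcal E(u(t),u_t(t))+k\int_0^t(D(u_t),u_t)ds=\mathcal E(u_0,u_1)+\int_0^t(N(u),u_t)ds$, where $E(u,v)=\frac12(|\mathcal A^{1/2}u|^2+|v|^2)+\Pi_0(u)$ and $\mathcal E(u,v)=E(u,v)+\Pi_1(u)$. Assumption (AB2): there is $\gamma\in[0,1)$ such that (i) there are $c_0\ge0$, $c_1>0$ with $|v|^2\le c_0+c_1(D(v),v)$ for all $v\in\mathcal D(\mathcal A^{1/2})$; (ii) there are $\eta\in[0,1)$, $c_2>0$, $c_3,c_4\ge0$ with $-k(D(v),u)+(N(u),u)\le(\Pi'(u),u)+\eta|\mathcal A^{1/2}u|^2-c_2\Pi_0(u)+c_3+c_4[1+E(u,v)]^\gamma(D(v),v)$ for all $u,v\in\mathcal D(\mathcal A^{1/2})$; (iii) there are $\eta\in[0,1)$ and a nondecreasing continuous $b:\mathbb R_+\to\mathbb R_+$ with $(N(u),v)\le\eta k(D(v),v)+\delta E(u,v)+b(1/\delta)$ for all $u,v\in\mathcal D(\mathcal A^{1/2})$ and all $0<\delta\le1$, and, in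 the case $\gamma>0$, the balancing condition $\lim_{x\to\infty}x^{1-1/\gamma}b(x)=0$. A set $\mathcal B_0$ is absorbing if for every bounded $B$ there is $t_0$ with $S_tB\subset\mathcal B_0$ for $t\ge t_0$; forward invariant if $S_t\mathcal B_0\subset\mathcal B_0$ for $t\ge0$. *)

theory Defs
  imports "HOL-Analysis.Analysis"
begin

(* Abstract setting.
   'h : the real Hilbert space H_0 (inner product = inner, norm = norm).
   'v : the space D(A^{1/2}) equipped with the inner product
        (A^{1/2}u, A^{1/2}w), so that norm u = |A^{1/2} u|.
   \<iota> : the (bounded, injective, dense) embedding D(A^{1/2}) \<hookrightarrow> H_0.
   The phase space \<H> = D(A^{1/2}) \<times> H_0 is the product type 'v \<times> 'h, whose
   library norm is sqrt(|A^{1/2}u|^2 + |v|^2).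
   Elements of [D(A^{1/2})]' are bounded linear functionals 'v \<Rightarrow>\<^sub>L real. *)

definition energy_E :: "('v::real_normed_vector \<Rightarrow> real) \<Rightarrow> 'v \<Rightarrow> 'h::real_normed_vector \<Rightarrow> real" where
  "energy_E Pi0 u v = (1/2) * ((norm u)\<^sup>2 + (norm v)\<^sup>2) + Pi0 u"

definition energy_full :: "('v::real_normed_vector \<Rightarrow> real) \<Rightarrow> ('v \<Rightarrow> real) \<Rightarrow> 'v \<Rightarrow> 'h::real_normed_vector \<Rightarrow> real" where
  "energy_full Pi0 Pi1 u v = energy_E Pi0 u v + Pi1 u"

(* (u, v) : [0,\<infinity>) \<rightarrow> D(A^{1/2}) \<times> H_0 is a (weak) solution of
     u_tt + A u + k D(u_t) = F(u)
   on [0,\<infinity>): u \<in> C(\<real>_+; D(A^{1/2})), v \<in> C(\<real>_+; H_0), v = u_t (in H_0),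
   u_t(t) \<in> D(A^{1/2}) for a.e. t (so that D(u_t) makes sense), and for every
   test element w \<in> D(A^{1/2}) the equation holds in integrated weak form:
     (u_t(t), w) - (u_t(0), w)
        = \<integral>_0^t [ -(A^{1/2}u, A^{1/2}w) - k (D(u_t), w) + (F(u), w) ] ds. *)
definition weak_solution ::
  "('v::{real_inner,complete_space} \<Rightarrow> 'h::{real_inner,complete_space}) \<Rightarrow> real \<Rightarrow>
   ('v \<Rightarrow> ('v \<Rightarrow>\<^sub>L real)) \<Rightarrow> ('v \<Rightarrow> 'h) \<Rightarrow> (real \<Rightarrow> 'v) \<Rightarrow> (real \<Rightarrow> 'h) \<Rightarrow> bool" where
  "weak_solution \<iota> k D F u v \<longleftrightarrow>
     continuous_on {0..} u \<and> continuous_on {0..} v \<and>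
     (\<forall>t\<ge>0. ((\<lambda>s. \<iota> (u s)) has_vector_derivative v t) (at t within {0..})) \<and>
     (AE t in lborel. 0 \<le> t \<longrightarrow> v t \<in> range \<iota>) \<and>
     (\<forall>w t. 0 \<le> t \<longrightarrow>
        ((\<lambda>s. - inner (u s) w - k * blinfun_apply (D (inv \<iota> (v s))) w + inner (F (u s)) (\<iota> w))
            integrable_on {0..t}) \<and>
        inner (v t) (\<iota> w) - inner (v 0) (\<iota> w) =
          integral {0..t}
            (\<lambda>s. - inner (u s) w - k * blinfun_apply (D (inv \<iota> (v s))) w + inner (F (u s)) (\<iota> w)))"

definition energy_identity ::
  "('v::{real_inner,complete_space} \<Rightarrow> 'h::{real_inner,complete_space}) \<Rightarrow> real \<Rightarrow>
   ('v \<Rightarrow> ('v \<Rightarrow>\<^sub>L real)) \<Rightarrow> ('v \<Rightarrow> 'h) \<Rightarrow> ('v \<Rightarrow> real) \<Rightarrow> ('v \<Rightarrow> real) \<Rightarrow>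
   (real \<Rightarrow> 'v) \<Rightarrow> (real \<Rightarrow> 'h) \<Rightarrow> bool" where
  "energy_identity \<iota> k D N Pi0 Pi1 u v \<longleftrightarrow>
     (\<forall>t\<ge>0.
        ((\<lambda>s. blinfun_apply (D (inv \<iota> (v s))) (inv \<iota> (v s))) integrable_on {0..t}) \<and>
        ((\<lambda>s. inner (N (u s)) (v s)) integrable_on {0..t}) \<and>
        energy_full Pi0 Pi1 (u t) (v t)
          + k * integral {0..t} (\<lambda>s. blinfun_apply (D (inv \<iota> (v s))) (inv \<iota> (v s)))
        = energy_full Pi0 Pi1 (u 0) (v 0) + integral {0..t} (\<lambda>s. inner (N (u s)) (v s)))"

definition absorbing_set :: "(real \<Rightarrow> 'a::real_normed_vector \<Rightarrow> 'a) \<Rightarrow> 'a set \<Rightarrow> bool" where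
  "absorbing_set S B0 \<longleftrightarrow>
     (\<forall>B. bounded B \<longrightarrow> (\<exists>t0\<ge>0. \<forall>t\<ge>t0. S t ` B \<subseteq> B0))"

definition forward_invariant :: "(real \<Rightarrow> 'a \<Rightarrow> 'a) \<Rightarrow> 'a set \<Rightarrow> bool" where
  "forward_invariant S B0 \<longleftrightarrow> (\<forall>t\<ge>0. S t ` B0 \<subseteq> B0)"

end

theory Submission
  imports Defs
begin

text \<open>The proof is a Lyapunov argument for the perturbed energy \<open>V = \<E> + \<epsilon> (u\<^sub>t, u)\<close>.
  The energy identity and (AB2)(iii) bound the growth of \<open>\<E>\<close> by the damping, while the multiplier
  \<open>(u\<^sub>t, u)\<close>, whose increments are read off from the weak formulation, produces decay of the
  energy itself through (AB2)(i),(ii). As long as \<open>\<E> \<le> R\<close> this gives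
  \<open>V' \<le> K(\<epsilon>) - (2 \<epsilon> \<theta> / 5) V\<close>, where the weight \<open>\<epsilon> = \<epsilon>(R)\<close> has to shrink with \<open>R\<close> because of
  the factor \<open>(1 + E)\<^sup>\<gamma>\<close> in (AB2)(ii); the balancing condition on \<open>b\<close> keeps the stationary level
  \<open>5 K(\<epsilon>) / (2 \<epsilon> \<theta>)\<close> below \<open>R / 12\<close> for large \<open>R\<close>. Hence a trajectory starting with
  \<open>\<E> \<le> \<rho>\<close> never reaches \<open>3 \<rho> + C\<close>, and after a time \<open>\<tau>(\<rho>)\<close> satisfies \<open>\<E> \<le> 3 \<rho> / 4\<close>. Iterating
  gives a uniform absorbing ball, whose images after its own entrance time form a bounded forward
  invariant absorbing set.\<close>

lemma integral_le_AE_lborel: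
  fixes f g :: "real \<Rightarrow> real"
  assumes f: "f integrable_on {a..b}" and g: "g integrable_on {a..b}"
    and le: "AE x in lborel. x \<in> {a..b} \<longrightarrow> f x \<le> g x"
  shows "integral {a..b} f \<le> integral {a..b} g"
proof -
  obtain N where N: "negligible N" "{x. \<not> (x \<in> {a..b} \<longrightarrow> f x \<le> g x)} \<subseteq> N"
    using AE_completion[OF le] unfolding eventually_ae_filter_negligible by blast
  define h where "h x = (if x \<in> N then f x else g x)" for x
  have "integral {a..b} f \<le> integral {a..b} h"
    using N by (intro integral_le f integrable_spike[OF g N(1)]) (auto simp: h_def)
  also have "\<dots> = integral {a..b} g"
    by (rule integral_spike[OF N(1)]) (simp add: h_def)
  finally show ?thesis .
qed

lemma increment_le_additive_of_local:
  fixes f :: "real \<Rightarrow> real" and I :: "real \<Rightarrow> real \<Rightarrow> real"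
  assumes additive: "\<And>a b c. s \<le> a \<Longrightarrow> a \<le> b \<Longrightarrow> b \<le> c \<Longrightarrow> c \<le> t \<Longrightarrow> I a c = I a b + I b c"
    and "h > 0"
    and local: "\<And>a b. s \<le> a \<Longrightarrow> a \<le> b \<Longrightarrow> b \<le> t \<Longrightarrow> b - a \<le> h \<Longrightarrow> f b - f a \<le> I a b"
    and "s \<le> t"
  shows "f t - f s \<le> I s t"
proof -
  have "f t - f a \<le> I a t" if "s \<le> a" "a \<le> t" "t - a \<le> real n * h" for n a
    using that
  proof (induction n arbitrary: a)
    case 0
    then show ?case using local[of a t] \<open>h > 0\<close> by auto
  next
    case (Suc n)
    show ?case
    proof (cases "t - a \<le> h")
      case True
      then show ?thesis using local[of a t] Suc.prems by auto
    next
      case False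
      have "f t - f (a + h) \<le> I (a + h) t"
        using Suc.IH[of "a + h"] Suc.prems False \<open>h > 0\<close> by (auto simp: algebra_simps)
      moreover have "f (a + h) - f a \<le> I a (a + h)"
        using local[of a "a + h"] Suc.prems False \<open>h > 0\<close> by auto
      moreover have "I a t = I a (a + h) + I (a + h) t"
        using additive[of a "a + h" t] Suc.prems False \<open>h > 0\<close> by auto
      ultimately show ?thesis by linarith
    qed
  qed
  moreover obtain n where "(t - s) / h \<le> real n"
    using real_arch_simple by blast
  then have "t - s \<le> real n * h"
    using \<open>h > 0\<close> by (simp add: field_simps)
  ultimately show ?thesis
    using \<open>s \<le> t\<close> by blast
qed

lemma last_level_crossing:
  fixes f :: "real \<Rightarrow> real"
  assumes cont: "continuous_on {a..b} f" and "f a \<le> M" "M < f b" "a \<le> b"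
  obtains c where "a \<le> c" "c < b" "f c = M" "\<And>x. x \<in> {c..b} \<Longrightarrow> M \<le> f x"
proof -
  define A where "A = {a..b} \<inter> f -` {..M}"
  have "closed A"
    unfolding A_def by (rule continuous_closed_preimage) (auto intro: cont)
  moreover have "a \<in> A" "bdd_above A"
    using assms by (auto simp: A_def bdd_above_def)
  ultimately have cA: "Sup A \<in> A"
    using closed_contains_Sup by blast
  have above: "r \<le> Sup A" if "r \<in> A" for r
    using that \<open>bdd_above A\<close> by (simp add: cSup_upper)
  have "continuous_on {Sup A..b} f"
    using cA by (auto simp: A_def intro: continuous_on_subset[OF cont])
  then obtain c where c: "Sup A \<le> c" "c \<le> b" "f c = M"
    using IVT'[of f "Sup A" M b] cA \<open>M < f b\<close> by (auto simp: A_def)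
  then have "c = Sup A"
    using above[of c] cA by (force simp: A_def)
  have "M \<le> f x" if "x \<in> {c..b}" for x
  proof (cases "x \<in> A")
    case True
    then show ?thesis using above[of x] that \<open>c = Sup A\<close> c by force
  next
    case False
    then show ?thesis using that cA \<open>c = Sup A\<close> by (auto simp: A_def)
  qed
  moreover have "a \<le> c"
    using cA \<open>c = Sup A\<close> by (auto simp: A_def)
  moreover have "c < b"
    using c(2,3) \<open>M < f b\<close> by (cases "c = b") auto
  ultimately show ?thesis
    using that c by blast
qed

lemma first_level_crossing:
  fixes f :: "real \<Rightarrow> real"
  assumes cont: "continuous_on {a..b} f" and "f a < M" "M \<le> f b" "a \<le> b"
  obtains c where "a < c" "c \<le> b" "f c = M" "\<And>x. x \<in> {a..c} \<Longrightarrow> f x \<le> M"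
proof -
  define A where "A = {a..b} \<inter> f -` {M..}"
  have "closed A"
    unfolding A_def by (rule continuous_closed_preimage) (auto intro: cont)
  moreover have "b \<in> A" "bdd_below A"
    using assms by (auto simp: A_def bdd_below_def)
  ultimately have cA: "Inf A \<in> A"
    using closed_contains_Inf by blast
  have below: "Inf A \<le> r" if "r \<in> A" for r
    using that \<open>bdd_below A\<close> by (simp add: cInf_lower)
  have "continuous_on {a..Inf A} f"
    using cA by (auto simp: A_def intro: continuous_on_subset[OF cont])
  then obtain c where c: "a \<le> c" "c \<le> Inf A" "f c = M"
    using IVT'[of f a M "Inf A"] cA \<open>f a < M\<close> by (auto simp: A_def)
  then have "c = Inf A"
    using below[of c] cA by (force simp: A_def)
  have "f x \<le> M" if "x \<in> {a..c}" for x
  proof (cases "x \<in> A")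
    case True
    then show ?thesis using below[of x] that \<open>c = Inf A\<close> c by force
  next
    case False
    then show ?thesis using that cA \<open>c = Inf A\<close> by (auto simp: A_def)
  qed
  moreover have "c \<le> b"
    using cA \<open>c = Inf A\<close> by (auto simp: A_def)
  moreover have "a < c"
    using c(1,3) \<open>f a < M\<close> by (cases "c = a") auto
  ultimately show ?thesis
    using that c by blast
qed

lemma continuous_induction_less:
  fixes f :: "real \<Rightarrow> real"
  assumes "continuous_on {a..b} f" "a \<le> b" "f a < R"
    and step: "\<And>t. t \<in> {a..b} \<Longrightarrow> (\<And>r. r \<in> {a..t} \<Longrightarrow> f r \<le> R) \<Longrightarrow> f t < R"
  shows "f b < R"
proof (rule ccontr)
  assume "\<not> f b < R"
  then have "R \<le> f b"
    by simp
  then obtain c where "a < c" "c \<le> b" "f c = R" "\<And>x. x \<in> {a..c} \<Longrightarrow> f x \<le> R"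
    using first_level_crossing[OF assms(1) assms(3) _ assms(2)] by blast
  then show False
    using step[of c] by auto
qed

text \<open>The hypothesis \<open>decay\<close> below is the integrated form of \<open>W' \<le> - \<alpha> W\<close>.\<close>

lemma decay_ineq_stays_below:
  fixes W :: "real \<Rightarrow> real"
  assumes cont: "continuous_on {a..T} W" and "0 \<le> \<alpha>"
    and decay: "\<And>p q. a \<le> p \<Longrightarrow> p \<le> q \<Longrightarrow> q \<le> T \<Longrightarrow> W q - W p \<le> - \<alpha> * integral {p..q} W"
    and "W a \<le> M" "0 \<le> M" "a \<le> t" "t \<le> T"
  shows "W t \<le> M"
proof (rule ccontr)
  assume "\<not> W t \<le> M"
  moreover have "continuous_on {a..t} W"
    using cont \<open>t \<le> T\<close> by (auto intro: continuous_on_subset)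
  ultimately obtain c where c: "a \<le> c" "c < t" "W c = M" "\<And>x. x \<in> {c..t} \<Longrightarrow> M \<le> W x"
    using last_level_crossing[of a t W M] \<open>W a \<le> M\<close> \<open>a \<le> t\<close> by (metis not_le)
  have "continuous_on {c..t} W"
    using cont c \<open>t \<le> T\<close> by (auto intro: continuous_on_subset)
  moreover have "0 \<le> W x" if "x \<in> {c..t}" for x
    using c(4)[OF that] \<open>0 \<le> M\<close> by linarith
  ultimately have "0 \<le> integral {c..t} W"
    by (intro integral_nonneg integrable_continuous_interval)
  then have "0 \<le> \<alpha> * integral {c..t} W"
    using \<open>0 \<le> \<alpha>\<close> by simp
  moreover have "W t - W c \<le> - \<alpha> * integral {c..t} W"
    using decay[of c t] c(1,2) \<open>t \<le> T\<close> by simp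
  ultimately have "W t \<le> W c"
    by linarith
  then show False
    using c \<open>\<not> W t \<le> M\<close> by simp
qed

lemma decay_ineq_reaches_below:
  fixes W :: "real \<Rightarrow> real"
  assumes cont: "continuous_on {a..a + \<tau>} W" and "0 < \<alpha>" "0 < m" "0 \<le> \<tau>"
    and decay: "\<And>p q. a \<le> p \<Longrightarrow> p \<le> q \<Longrightarrow> q \<le> a + \<tau> \<Longrightarrow> W q - W p \<le> - \<alpha> * integral {p..q} W"
    and "W a \<le> \<alpha> * m * \<tau>"
  shows "W (a + \<tau>) \<le> m"
proof (cases "\<exists>r\<in>{a..a + \<tau>}. W r \<le> m")
  case True
  then obtain r where "r \<in> {a..a + \<tau>}" "W r \<le> m"
    by blast
  show ?thesis
  proof (rule decay_ineq_stays_below[of r "a + \<tau>" W \<alpha>])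
    show "continuous_on {r..a + \<tau>} W"
      using cont \<open>r \<in> {a..a + \<tau>}\<close> by (auto intro: continuous_on_subset)
    show "W q - W p \<le> - \<alpha> * integral {p..q} W" if "r \<le> p" "p \<le> q" "q \<le> a + \<tau>" for p q
      using decay that \<open>r \<in> {a..a + \<tau>}\<close> by simp
  qed (use \<open>r \<in> {a..a + \<tau>}\<close> \<open>W r \<le> m\<close> \<open>0 < \<alpha>\<close> \<open>0 < m\<close> in auto)
next
  case False
  have "integral {a..a + \<tau>} (\<lambda>x. m) \<le> integral {a..a + \<tau>} W"
    using False by (intro integral_le integrable_continuous_interval[OF cont]) force+
  then have "m * \<tau> \<le> integral {a..a + \<tau>} W"
    using \<open>0 \<le> \<tau>\<close> by (simp add: mult.commute)
  then have "\<alpha> * (m * \<tau>) \<le> \<alpha> * integral {a..a + \<tau>} W"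
    using \<open>0 < \<alpha>\<close> by simp
  moreover have "W (a + \<tau>) - W a \<le> - \<alpha> * integral {a..a + \<tau>} W"
    using decay[of a "a + \<tau>"] \<open>0 \<le> \<tau>\<close> by simp
  ultimately show ?thesis
    using \<open>W a \<le> \<alpha> * m * \<tau>\<close> \<open>0 < m\<close> by (simp add: mult.assoc)
qed

lemma continuous_on_atLeast_integrable: "continuous_on {0..} f \<Longrightarrow> 0 \<le> s \<Longrightarrow> (f::real \<Rightarrow> real) integrable_on {s..t}"
  by (rule integrable_continuous_interval) (auto intro: continuous_on_subset)

lemma power2_norm_prod: "(norm z)\<^sup>2 = (norm (fst z))\<^sup>2 + (norm (snd z))\<^sup>2"
  by (cases z) (simp add: norm_Pair)

lemma inverse_min3_le:
  fixes a1 a2 a3 :: real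
  shows "0 < a1 \<Longrightarrow> 0 < a2 \<Longrightarrow> 0 < a3 \<Longrightarrow> 1 / min (min a1 a2) a3 \<le> 1 / a1 + 1 / a2 + 1 / a3"
  by (cases "a1 \<le> a2"; cases "a1 \<le> a3"; cases "a2 \<le> a3") (auto simp: min_def add_pos_pos)

lemma bounded_on_balls_if_locally_lipschitz:
  fixes F :: "'a::real_normed_vector \<Rightarrow> 'b::real_normed_vector"
  assumes "\<forall>R. \<exists>L. \<forall>x y. norm x \<le> R \<longrightarrow> norm y \<le> R \<longrightarrow> norm (F x - F y) \<le> L * norm (x - y)"
  shows "\<exists>C. \<forall>x. norm x \<le> R \<longrightarrow> norm (F x) \<le> C"
proof -
  obtain L where L: "\<And>x y. norm x \<le> max R 0 \<Longrightarrow> norm y \<le> max R 0 \<Longrightarrow> norm (F x - F y) \<le> L * norm (x - y)"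
    using assms by blast
  have "norm (F x) \<le> norm (F 0) + \<bar>L\<bar> * max R 0" if "norm x \<le> R" for x
  proof -
    have "norm (F x - F 0) \<le> L * norm x"
      using L[of x 0] that by auto
    also have "\<dots> \<le> \<bar>L\<bar> * max R 0"
      using that by (intro mult_mono) auto
    finally show ?thesis
      using norm_triangle_sub[of "F x" "F 0"] by linarith
  qed
  then show ?thesis
    by blast
qed

lemma absorbing_set_if_ultimately_bounded:
  fixes S :: "real \<Rightarrow> 'a::real_normed_vector \<Rightarrow> 'a"
  assumes semigroup: "\<forall>t s y. 0 \<le> t \<longrightarrow> 0 \<le> s \<longrightarrow> S (t + s) y = S t (S s y)"
    and bounded: "\<forall>B. bounded B \<longrightarrow> (\<exists>t0\<ge>0. \<forall>y\<in>B. \<forall>t\<ge>t0. norm (S t y) \<le> R0)"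
  shows "\<exists>B0. bounded B0 \<and> forward_invariant S B0 \<and> absorbing_set S B0"
proof -
  obtain t1 where t1: "0 \<le> t1" "\<And>y t. y \<in> cball 0 R0 \<Longrightarrow> t1 \<le> t \<Longrightarrow> norm (S t y) \<le> R0"
    using bounded[rule_format, OF bounded_cball[of 0 R0]] by blast
  define B0 where "B0 = {S t y | t y. t1 \<le> t \<and> y \<in> cball 0 R0}"
  have "B0 \<subseteq> cball 0 R0"
    unfolding B0_def using t1(2) by auto
  then have "bounded B0"
    using bounded_subset bounded_cball by blast
  moreover have "forward_invariant S B0"
    unfolding forward_invariant_def
  proof (intro allI impI subsetI)
    fix s x
    assume "0 \<le> s" "x \<in> S s ` B0"
    then obtain t y where "t1 \<le> t" "y \<in> cball 0 R0" "x = S (s + t) y"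
      unfolding B0_def using semigroup t1(1) by auto
    then show "x \<in> B0"
      unfolding B0_def using \<open>0 \<le> s\<close> by (intro CollectI exI[of _ "s + t"] exI[of _ y]) auto
  qed
  moreover have "absorbing_set S B0"
    unfolding absorbing_set_def
  proof (intro allI impI)
    fix B :: "'a set"
    assume "bounded B"
    then obtain t0 where t0: "0 \<le> t0" "\<And>y t. y \<in> B \<Longrightarrow> t0 \<le> t \<Longrightarrow> norm (S t y) \<le> R0"
      using bounded[rule_format, OF \<open>bounded B\<close>] by blast
    have "S t ` B \<subseteq> B0" if "t0 + t1 \<le> t" for t
    proof
      fix x
      assume "x \<in> S t ` B"
      then obtain y where "y \<in> B" "x = S t y"
        by blast
      moreover have "S t y = S t1 (S (t - t1) y)"
        using semigroup[rule_format, of t1 "t - t1" y] that t0(1) t1(1) by simp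
      moreover have "S (t - t1) y \<in> cball 0 R0"
        using t0(2)[OF \<open>y \<in> B\<close>] that t1(1) by auto
      ultimately show "x \<in> B0"
        unfolding B0_def by blast
    qed
    then show "\<exists>t0\<ge>0. \<forall>t\<ge>t0. S t ` B \<subseteq> B0"
      using t0(1) t1(1) by (intro exI[of _ "t0 + t1"]) auto
  qed
  ultimately show ?thesis
    by blast
qed

text \<open>The locale assumes only what the argument uses: \<open>(D(v), v) \<ge> 0\<close> instead of monotonicity of
  \<open>D\<close>, boundedness of \<open>F\<close> on balls instead of local Lipschitz continuity, continuity of \<open>\<Pi>\<close>
  instead of differentiability, and (AB1)(ii)(b) only for \<open>\<eta> = 1/4\<close>.\<close>

locale damped_wave =
  fixes \<iota> :: "'v::{real_inner,complete_space} \<Rightarrow> 'h::{real_inner,complete_space}"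
    and k :: real
    and D :: "'v \<Rightarrow> ('v \<Rightarrow>\<^sub>L real)"
    and F N :: "'v \<Rightarrow> 'h"
    and Pi0 Pi1 :: "'v \<Rightarrow> real"
    and Pi' :: "'v \<Rightarrow> ('v \<Rightarrow>\<^sub>L real)"
    and S :: "real \<Rightarrow> 'v \<times> 'h \<Rightarrow> 'v \<times> 'h"
    and \<gamma> cP c0 c1 \<eta>2 c2 c3 c4 \<eta>3 :: real
    and b :: "real \<Rightarrow> real"
  assumes emb_linear: "bounded_linear \<iota>"
    and k_pos: "0 < k"
    and D_nonneg: "\<And>v. 0 \<le> D v v"
    and F_bounded: "\<And>R. \<exists>C. \<forall>x. norm x \<le> R \<longrightarrow> norm (F x) \<le> C"
    and Pi_continuous: "continuous_on UNIV (\<lambda>x. Pi0 x + Pi1 x)"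
    and F_decomp: "\<And>u w. inner (F u) (\<iota> w) = - Pi' u w + inner (N u) (\<iota> w)"
    and Pi0_nonneg: "\<And>u. 0 \<le> Pi0 u"
    and Pi0_bounded: "\<And>R. \<exists>C. \<forall>u. norm u \<le> R \<longrightarrow> Pi0 u \<le> C"
    and Pi1_bound: "\<And>u. \<bar>Pi1 u\<bar> \<le> 1/4 * ((norm u)\<^sup>2 + Pi0 u) + cP"
    and cP_nonneg: "0 \<le> cP"
    and S_solution: "\<And>y. weak_solution \<iota> k D F (\<lambda>t. fst (S t y)) (\<lambda>t. snd (S t y))"
    and S_zero: "\<And>y. S 0 y = y"
    and S_energy: "\<And>y. energy_identity \<iota> k D N Pi0 Pi1 (\<lambda>t. fst (S t y)) (\<lambda>t. snd (S t y))"
    and \<gamma>: "0 \<le> \<gamma>" "\<gamma> < 1"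
    and AB2_i: "0 \<le> c0" "0 < c1" "\<And>v. (norm (\<iota> v))\<^sup>2 \<le> c0 + c1 * D v v"
    and AB2_ii: "0 \<le> \<eta>2" "\<eta>2 < 1" "0 < c2" "0 \<le> c3" "0 \<le> c4"
      "\<And>u v. - k * D v u + inner (N u) (\<iota> u)
          \<le> Pi' u u + \<eta>2 * (norm u)\<^sup>2 - c2 * Pi0 u + c3 + c4 * (1 + energy_E Pi0 u (\<iota> v)) powr \<gamma> * D v v"
    and AB2_iii: "\<eta>3 < 1" "mono_on {0..} b" "\<And>x. 0 \<le> x \<Longrightarrow> 0 \<le> b x"
      "\<And>u v \<delta>. 0 < \<delta> \<Longrightarrow> \<delta> \<le> 1 \<Longrightarrow>
          inner (N u) (\<iota> v) \<le> \<eta>3 * k * D v v + \<delta> * energy_E Pi0 u (\<iota> v) + b (1 / \<delta>)"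
      "0 < \<gamma> \<Longrightarrow> ((\<lambda>x. x powr (1 - 1 / \<gamma>) * b x) \<longlongrightarrow> 0) at_top"
begin

definition "disp y t = fst (S t y)"
definition "vel y t = snd (S t y)"

text \<open>\<open>vel_V\<close> is the velocity as an element of \<open>D(A\<^bsup>1/2\<^esup>)\<close>; the value of \<open>inv \<iota>\<close> is
  meaningful only for \<open>vel y t \<in> range \<iota>\<close>, which holds for almost every \<open>t\<close> (\<open>vel_V_AE\<close>).\<close>

definition "vel_V y t = inv \<iota> (vel y t)"
definition "damping y t = D (vel_V y t) (vel_V y t)"
definition "energy y t = energy_full Pi0 Pi1 (disp y t) (vel y t)"
definition "N_power y t = inner (N (disp y t)) (vel y t)"
definition "multiplier y t = inner (vel y t) (\<iota> (disp y t))"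
definition "weak_rhs y t z = - inner (disp y t) z - k * D (vel_V y t) z + inner (F (disp y t)) (\<iota> z)"

definition "emb_const = onorm \<iota> + 1"

lemma emb_const: "0 < emb_const" "norm (\<iota> x) \<le> emb_const * norm x"
proof -
  show "0 < emb_const"
    using onorm_pos_le[OF emb_linear] by (simp add: emb_const_def)
  have "norm (\<iota> x) \<le> onorm \<iota> * norm x"
    by (rule onorm[OF emb_linear])
  also have "\<dots> \<le> emb_const * norm x"
    by (simp add: emb_const_def mult_right_mono)
  finally show "norm (\<iota> x) \<le> emb_const * norm x" .
qed

lemma damping_nonneg: "0 \<le> damping y t"
  unfolding damping_def by (rule D_nonneg)

lemma energy_E_nonneg: "0 \<le> energy_E Pi0 u w"
  unfolding energy_E_def using Pi0_nonneg[of u] by simp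

lemma energy_E_bounds:
  shows "energy_E Pi0 u w \<le> 2 * energy_full Pi0 Pi1 u w + 2 * cP"
    and "energy_full Pi0 Pi1 u w \<le> 3/2 * energy_E Pi0 u w + cP"
    and "(norm u)\<^sup>2 + (norm w)\<^sup>2 \<le> 2 * energy_E Pi0 u w"
  using Pi1_bound[of u] Pi0_nonneg[of u] zero_le_power2[of "norm u"] zero_le_power2[of "norm w"]
  unfolding energy_full_def energy_E_def abs_le_iff by argo+

lemma energy_lower_bound: "- cP \<le> energy y t"
  using energy_E_bounds(1)[of "disp y t" "vel y t"] energy_E_nonneg[of "disp y t" "vel y t"]
  unfolding energy_def by argo

lemma solution:
  shows "continuous_on {0..} (disp y)" "continuous_on {0..} (vel y)"
    and "\<And>t. 0 \<le> t \<Longrightarrow> ((\<lambda>s. \<iota> (disp y s)) has_vector_derivative vel y t) (at t within {0..})"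
    and "AE t in lborel. 0 \<le> t \<longrightarrow> vel y t \<in> range \<iota>"
    and "\<And>w t. 0 \<le> t \<Longrightarrow> (\<lambda>s. weak_rhs y s w) integrable_on {0..t}"
    and "\<And>w t. 0 \<le> t \<Longrightarrow>
           inner (vel y t) (\<iota> w) - inner (vel y 0) (\<iota> w) = integral {0..t} (\<lambda>s. weak_rhs y s w)"
  using S_solution[of y]
  unfolding weak_solution_def disp_def[abs_def] vel_def[abs_def] weak_rhs_def vel_V_def
  by auto

lemma energy_equation:
  assumes "0 \<le> t"
  shows "damping y integrable_on {0..t}" "N_power y integrable_on {0..t}"
    and "energy y t + k * integral {0..t} (damping y) = energy y 0 + integral {0..t} (N_power y)"
  using S_energy[of y] assms
  unfolding energy_identity_def disp_def[abs_def] vel_def[abs_def] damping_def[abs_def] vel_V_def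
    energy_def N_power_def
  by auto

lemma vel_V_AE: "AE r in lborel. 0 \<le> r \<longrightarrow> \<iota> (vel_V y r) = vel y r"
  using solution(4)[of y] by eventually_elim (auto simp: vel_V_def f_inv_into_f)

lemma energy_continuous: "continuous_on {0..} (energy y)"
proof -
  have eq: "energy y = (\<lambda>t. 1/2 * ((norm (disp y t))\<^sup>2 + (norm (vel y t))\<^sup>2) + (Pi0 (disp y t) + Pi1 (disp y t)))"
    unfolding energy_def[abs_def] energy_full_def energy_E_def by auto
  have "continuous_on {0..} (\<lambda>t. Pi0 (disp y t) + Pi1 (disp y t))"
    using continuous_on_compose2[OF Pi_continuous solution(1)] by auto
  then show ?thesis
    unfolding eq by (intro continuous_on_add[OF _ \<open>continuous_on _ _\<close>] continuous_intros solution(1,2))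
qed

lemma multiplier_continuous: "continuous_on {0..} (multiplier y)"
  unfolding multiplier_def[abs_def]
  by (intro continuous_intros solution continuous_on_compose2[OF linear_continuous_on[OF emb_linear] solution(1)])
    auto

lemma damping_integrable: "0 \<le> s \<Longrightarrow> damping y integrable_on {s..t}"
  using integrable_subinterval_real[OF energy_equation(1)[of "max s t" y]] by auto

lemma N_power_integrable: "0 \<le> s \<Longrightarrow> N_power y integrable_on {s..t}"
  using integrable_subinterval_real[OF energy_equation(2)[of "max s t" y]] by auto

lemma energy_increment:
  assumes "0 \<le> s" "s \<le> t"
  shows "energy y t - energy y s = - k * integral {s..t} (damping y) + integral {s..t} (N_power y)"
proof -
  have "0 \<le> t"
    using assms by linarith
  have "integral {0..t} (damping y) = integral {0..s} (damping y) + integral {s..t} (damping y)"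
    "integral {0..t} (N_power y) = integral {0..s} (N_power y) + integral {s..t} (N_power y)"
    using Henstock_Kurzweil_Integration.integral_combine[OF assms energy_equation(1)[OF \<open>0 \<le> t\<close>]]
      Henstock_Kurzweil_Integration.integral_combine[OF assms energy_equation(2)[OF \<open>0 \<le> t\<close>]]
    by auto
  then show ?thesis
    using energy_equation(3)[of s y] energy_equation(3)[of t y] assms by (simp add: algebra_simps)
qed

lemma F_bound_on_ball:
  obtains C where "0 \<le> C" "\<And>x. norm x \<le> R \<Longrightarrow> norm (F x) \<le> C"
proof -
  obtain C where "\<forall>x. norm x \<le> R \<longrightarrow> norm (F x) \<le> C"
    using F_bounded by blast
  then show ?thesis
    using that[of "max C 0"] by force
qed

lemma Pi0_bound_on_ball:
  obtains C where "0 \<le> C" "\<And>x. norm x \<le> R \<Longrightarrow> Pi0 x \<le> C"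
proof -
  obtain C where "\<forall>x. norm x \<le> R \<longrightarrow> Pi0 x \<le> C"
    using Pi0_bounded by blast
  then show ?thesis
    using that[of "max C 0"] by force
qed

text \<open>For unit vectors \<open>u\<close> all terms of (AB2)(ii) other than \<open>k (D(v), u)\<close> and the damping term are
  bounded; applied to \<open>\<plusminus>u\<close> this bounds \<open>|(D(v), z)|\<close> linearly in \<open>(D(v), v)\<close>.\<close>

lemma D_unit_bound:
  obtains A0 A1 where "0 \<le> A0" "0 \<le> A1"
    "\<And>U v. norm U = 1 \<Longrightarrow> norm (\<iota> v) \<le> B \<Longrightarrow> - k * D v U \<le> A0 + A1 * D v v"
proof -
  obtain CF where CF: "0 \<le> CF" "\<And>x. norm x \<le> 1 \<Longrightarrow> norm (F x) \<le> CF"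
    using F_bound_on_ball by blast
  obtain CP where CP: "0 \<le> CP" "\<And>x. norm x \<le> 1 \<Longrightarrow> Pi0 x \<le> CP"
    using Pi0_bound_on_ball by blast
  define A1 where "A1 = c4 * (2 + (max B 0)\<^sup>2 / 2 + CP)"
  have "- k * D v U \<le> CF * emb_const + \<eta>2 + c3 + A1 * D v v" if U: "norm U = 1" and v: "norm (\<iota> v) \<le> B" for U v
  proof -
    let ?E = "energy_E Pi0 U (\<iota> v)"
    have "- inner (F U) (\<iota> U) \<le> norm (F U) * norm (\<iota> U)"
      using Cauchy_Schwarz_ineq2[of "F U" "\<iota> U"] by linarith
    also have "\<dots> \<le> CF * emb_const"
      using CF(2)[of U] emb_const(2)[of U] U CF(1) by (intro mult_mono) auto
    finally have F_part: "- inner (F U) (\<iota> U) \<le> CF * emb_const" .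
    have "(norm (\<iota> v))\<^sup>2 \<le> (max B 0)\<^sup>2"
      using v by (intro power_mono) auto
    moreover have "?E = (1 + (norm (\<iota> v))\<^sup>2) / 2 + Pi0 U"
      using U unfolding energy_E_def by simp
    ultimately have "?E \<le> 1 + (max B 0)\<^sup>2 / 2 + CP"
      using CP(2)[of U] U by argo
    moreover have "(1 + ?E) powr \<gamma> \<le> 1 + ?E"
      using powr_mono[of \<gamma> 1 "1 + ?E"] \<gamma> energy_E_nonneg[of U "\<iota> v"] by simp
    ultimately have "c4 * (1 + ?E) powr \<gamma> * D v v \<le> A1 * D v v"
      unfolding A1_def using AB2_ii(5) D_nonneg[of v] by (intro mult_right_mono mult_left_mono) auto
    moreover have "- c2 * Pi0 U \<le> 0"
      using AB2_ii(3) Pi0_nonneg[of U] by simp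
    ultimately show ?thesis
      using AB2_ii(6)[where u = U and v = v] F_decomp[of U U] F_part U by simp
  qed
  moreover have "0 \<le> CF * emb_const + \<eta>2 + c3" "0 \<le> A1"
    unfolding A1_def using CF CP AB2_ii emb_const by simp_all
  ultimately show ?thesis
    using that by blast
qed

lemma D_apply_bound:
  obtains M where "0 \<le> M" "\<And>v z. norm (\<iota> v) \<le> B \<Longrightarrow> \<bar>D v z\<bar> \<le> M * (1 + D v v) * norm z"
proof -
  obtain A0 A1 where A: "0 \<le> A0" "0 \<le> A1"
    and unit: "\<And>U v. norm U = 1 \<Longrightarrow> norm (\<iota> v) \<le> B \<Longrightarrow> - k * D v U \<le> A0 + A1 * D v v"
    by (rule D_unit_bound) iprover
  define M where "M = (A0 + A1) / k"
  have "\<bar>D v z\<bar> \<le> M * (1 + D v v) * norm z" if v: "norm (\<iota> v) \<le> B" for v z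
  proof (cases "z = 0")
    case True
    then show ?thesis by simp
  next
    case False
    define U where "U = (1 / norm z) *\<^sub>R z"
    have "norm U = 1" "norm (- U) = 1"
      using False by (simp_all add: U_def)
    then have "- k * D v U \<le> A0 + A1 * D v v" "k * D v U \<le> A0 + A1 * D v v"
      using unit[OF _ v, of U] unit[OF _ v, of "- U"] by (auto simp: blinfun.minus_right)
    then have "k * \<bar>D v U\<bar> \<le> A0 + A1 * D v v"
      using k_pos by (simp add: abs_if)
    also have "\<dots> \<le> (A0 + A1) * (1 + D v v)"
      using A D_nonneg[of v] by (simp add: algebra_simps)
    finally have "\<bar>D v U\<bar> \<le> M * (1 + D v v)"
      unfolding M_def using k_pos by (simp add: field_simps)
    moreover have "D v z = norm z * D v U"
      using False by (simp add: U_def blinfun.scaleR_right)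
    ultimately show ?thesis
      by (simp add: abs_mult mult_left_mono mult.commute)
  qed
  moreover have "0 \<le> M"
    unfolding M_def using A k_pos by simp
  ultimately show ?thesis
    using that by blast
qed

lemma weak_rhs_diff: "weak_rhs y r (z1 - z2) = weak_rhs y r z1 - weak_rhs y r z2"
  unfolding weak_rhs_def inner_diff_right blinfun.diff_right linear_diff[OF bounded_linear.linear[OF emb_linear]]
  by (simp add: algebra_simps)

lemma trajectory_bounded:
  assumes "0 \<le> s"
  obtains B where "0 \<le> B" "\<And>r. r \<in> {s..t} \<Longrightarrow> norm (disp y r) \<le> B" "\<And>r. r \<in> {s..t} \<Longrightarrow> norm (vel y r) \<le> B"
proof -
  have "continuous_on {s..t} (disp y)" "continuous_on {s..t} (vel y)"
    using solution(1,2)[of y] assms by (auto intro: continuous_on_subset)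
  then obtain B1 B2 where "\<forall>x\<in>disp y ` {s..t}. norm x \<le> B1" "\<forall>x\<in>vel y ` {s..t}. norm x \<le> B2"
    using compact_imp_bounded[OF compact_continuous_image] compact_Icc bounded_iff by metis
  then show ?thesis
    using that[of "max (max B1 B2) 0"] by force
qed

lemma weak_rhs_bound:
  assumes "0 \<le> s"
  obtains \<Lambda> where "\<And>r. 0 \<le> \<Lambda> r" "\<Lambda> integrable_on {s..t}"
    "AE r in lborel. r \<in> {s..t} \<longrightarrow> (\<forall>z. \<bar>weak_rhs y r z\<bar> \<le> \<Lambda> r * norm z)"
proof -
  obtain B where B: "0 \<le> B" "\<And>r. r \<in> {s..t} \<Longrightarrow> norm (disp y r) \<le> B"
    "\<And>r. r \<in> {s..t} \<Longrightarrow> norm (vel y r) \<le> B"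
    using trajectory_bounded[OF assms] by blast
  obtain CF where CF: "0 \<le> CF" "\<And>x. norm x \<le> B \<Longrightarrow> norm (F x) \<le> CF"
    using F_bound_on_ball by blast
  obtain M where M: "0 \<le> M" "\<And>v z. norm (\<iota> v) \<le> B \<Longrightarrow> \<bar>D v z\<bar> \<le> M * (1 + D v v) * norm z"
    using D_apply_bound by blast
  define \<Lambda> where "\<Lambda> r = B + CF * emb_const + k * M * (1 + damping y r)" for r
  have "0 \<le> \<Lambda> r" for r
    unfolding \<Lambda>_def using B CF emb_const M k_pos damping_nonneg[of y r] by simp
  moreover have "\<Lambda> integrable_on {s..t}"
    unfolding \<Lambda>_def by (intro integrable_add integrable_const_ivl integrable_on_mult_right damping_integrable assms)
  moreover have "AE r in lborel. r \<in> {s..t} \<longrightarrow> (\<forall>z. \<bar>weak_rhs y r z\<bar> \<le> \<Lambda> r * norm z)"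
    using vel_V_AE[of y]
  proof eventually_elim
    case (elim r)
    show ?case
    proof (intro impI allI)
      fix z
      assume r: "r \<in> {s..t}"
      have "\<bar>inner (disp y r) z\<bar> \<le> B * norm z"
        using Cauchy_Schwarz_ineq2[of "disp y r" z] B(2)[OF r] by (meson mult_right_mono norm_ge_zero order_trans)
      moreover have "\<bar>inner (F (disp y r)) (\<iota> z)\<bar> \<le> CF * emb_const * norm z"
      proof -
        have "\<bar>inner (F (disp y r)) (\<iota> z)\<bar> \<le> norm (F (disp y r)) * norm (\<iota> z)"
          by (rule Cauchy_Schwarz_ineq2)
        also have "\<dots> \<le> CF * (emb_const * norm z)"
          using CF(2)[OF B(2)[OF r]] emb_const(2)[of z] CF(1) by (intro mult_mono) auto
        finally show ?thesis by (simp add: mult.assoc)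
      qed
      moreover have "\<bar>k * D (vel_V y r) z\<bar> \<le> k * M * (1 + damping y r) * norm z"
      proof -
        have "norm (\<iota> (vel_V y r)) \<le> B"
          using elim r B(3)[OF r] assms by simp
        then show ?thesis
          using M(2)[of "vel_V y r" z] k_pos by (simp add: abs_mult mult.assoc damping_def)
      qed
      ultimately show "\<bar>weak_rhs y r z\<bar> \<le> \<Lambda> r * norm z"
        unfolding weak_rhs_def \<Lambda>_def by (simp add: algebra_simps abs_le_iff)
    qed
  qed
  ultimately show ?thesis
    using that by blast
qed

lemma multiplier_increment:
  assumes "0 \<le> p" "p \<le> q"
  shows "multiplier y q - multiplier y p
    = integral {p..q} (\<lambda>r. weak_rhs y r (disp y p)) + integral {p..q} (\<lambda>r. inner (vel y q) (vel y r))"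
proof -
  have "(\<lambda>r. weak_rhs y r (disp y p)) integrable_on {0..q}"
    using solution(5) assms by simp
  then have "integral {0..q} (\<lambda>r. weak_rhs y r (disp y p))
      = integral {0..p} (\<lambda>r. weak_rhs y r (disp y p)) + integral {p..q} (\<lambda>r. weak_rhs y r (disp y p))"
    using Henstock_Kurzweil_Integration.integral_combine[OF assms] by (metis (no_types))
  then have vel_part: "inner (vel y q - vel y p) (\<iota> (disp y p)) = integral {p..q} (\<lambda>r. weak_rhs y r (disp y p))"
    using solution(6)[of p y "disp y p"] solution(6)[of q y "disp y p"] assms by (simp add: inner_diff_left)
  have deriv: "((\<lambda>s. inner (vel y q) (\<iota> (disp y s))) has_vector_derivative inner (vel y q) (vel y r)) (at r within {p..q})"
    if "r \<in> {p..q}" for r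
    using bounded_linear.has_vector_derivative[OF bounded_linear_inner_right,
        OF has_vector_derivative_within_subset[OF solution(3)[of r y], of "{p..q}"]] that assms
    by auto
  then have "((\<lambda>r. inner (vel y q) (vel y r)) has_integral inner (vel y q) (\<iota> (disp y q) - \<iota> (disp y p))) {p..q}"
    using fundamental_theorem_of_calculus[OF assms(2) deriv] by (simp add: inner_diff_right)
  then have disp_part: "inner (vel y q) (\<iota> (disp y q) - \<iota> (disp y p)) = integral {p..q} (\<lambda>r. inner (vel y q) (vel y r))"
    by (simp add: integral_unique)
  have "multiplier y q - multiplier y p
      = inner (vel y q - vel y p) (\<iota> (disp y p)) + inner (vel y q) (\<iota> (disp y q) - \<iota> (disp y p))"
    unfolding multiplier_def by (simp add: inner_diff_left inner_diff_right)
  then show ?thesis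
    using vel_part disp_part by simp
qed

lemma multiplier_increment_le:
  assumes "0 \<le> p" "p \<le> q" and "G integrable_on {p..q}" "\<Lambda> integrable_on {p..q}" "\<And>r. 0 \<le> \<Lambda> r"
    and G: "AE r in lborel. r \<in> {p..q} \<longrightarrow> (norm (vel y r))\<^sup>2 + weak_rhs y r (disp y r) \<le> G r"
    and \<Lambda>: "AE r in lborel. r \<in> {p..q} \<longrightarrow> (\<forall>z. \<bar>weak_rhs y r z\<bar> \<le> \<Lambda> r * norm z)"
    and disp_close: "\<And>r. r \<in> {p..q} \<Longrightarrow> norm (disp y p - disp y r) \<le> e"
    and vel_close: "\<And>r. r \<in> {p..q} \<Longrightarrow> inner (vel y q - vel y r) (vel y r) \<le> e"
  shows "multiplier y q - multiplier y p \<le> integral {p..q} (\<lambda>r. G r + e * \<Lambda> r + e)"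
proof -
  have vel_sq: "(\<lambda>r. (norm (vel y r))\<^sup>2) integrable_on {p..q}"
    by (rule continuous_on_atLeast_integrable[OF _ assms(1)]) (intro continuous_intros solution(2))
  have vel_inner: "(\<lambda>r. inner (vel y q) (vel y r)) integrable_on {p..q}"
    by (rule continuous_on_atLeast_integrable[OF _ assms(1)]) (intro continuous_intros solution(2))
  have int1: "(\<lambda>r. G r - (norm (vel y r))\<^sup>2 + e * \<Lambda> r) integrable_on {p..q}"
    by (intro integrable_add integrable_diff integrable_on_mult_right assms vel_sq)
  have int2: "(\<lambda>r. (norm (vel y r))\<^sup>2 + e) integrable_on {p..q}"
    by (intro integrable_add integrable_const_ivl vel_sq)
  have "integral {p..q} (\<lambda>r. weak_rhs y r (disp y p))
      \<le> integral {p..q} (\<lambda>r. G r - (norm (vel y r))\<^sup>2 + e * \<Lambda> r)"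
  proof (rule integral_le_AE_lborel[OF _ int1])
    show "(\<lambda>r. weak_rhs y r (disp y p)) integrable_on {p..q}"
      using integrable_subinterval_real[OF solution(5)[of q y "disp y p"]] assms by simp
    show "AE r in lborel. r \<in> {p..q} \<longrightarrow> weak_rhs y r (disp y p) \<le> G r - (norm (vel y r))\<^sup>2 + e * \<Lambda> r"
      using G \<Lambda>
    proof eventually_elim
      case (elim r)
      show ?case
      proof
        assume r: "r \<in> {p..q}"
        have "weak_rhs y r (disp y p) = weak_rhs y r (disp y r) + weak_rhs y r (disp y p - disp y r)"
          by (simp add: weak_rhs_diff)
        also have "\<dots> \<le> weak_rhs y r (disp y r) + \<Lambda> r * norm (disp y p - disp y r)"
          using elim(2) r by (meson abs_le_D1 add_left_mono atLeastAtMost_iff)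
        also have "\<dots> \<le> weak_rhs y r (disp y r) + \<Lambda> r * e"
          using disp_close[OF r] assms(5)[of r] by (simp add: mult_left_mono)
        finally show "weak_rhs y r (disp y p) \<le> G r - (norm (vel y r))\<^sup>2 + e * \<Lambda> r"
          using elim(1) r by (simp add: mult.commute)
      qed
    qed
  qed
  moreover have "integral {p..q} (\<lambda>r. inner (vel y q) (vel y r)) \<le> integral {p..q} (\<lambda>r. (norm (vel y r))\<^sup>2 + e)"
  proof (rule integral_le[OF vel_inner int2])
    fix r
    assume "r \<in> {p..q}"
    have "inner (vel y q) (vel y r) = (norm (vel y r))\<^sup>2 + inner (vel y q - vel y r) (vel y r)"
      by (simp add: inner_diff_left power2_norm_eq_inner)
    then show "inner (vel y q) (vel y r) \<le> (norm (vel y r))\<^sup>2 + e"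
      using vel_close[OF \<open>r \<in> {p..q}\<close>] by simp
  qed
  moreover have "integral {p..q} (\<lambda>r. G r - (norm (vel y r))\<^sup>2 + e * \<Lambda> r) + integral {p..q} (\<lambda>r. (norm (vel y r))\<^sup>2 + e)
      = integral {p..q} (\<lambda>r. G r + e * \<Lambda> r + e)"
    using integral_add[OF int1 int2, symmetric] by (simp add: algebra_simps)
  ultimately show ?thesis
    using multiplier_increment[OF assms(1,2), of y] by linarith
qed

lemma trajectory_locally_close:
  assumes "0 \<le> s" "0 < e"
  obtains h where "0 < h"
    "\<And>p q r. s \<le> p \<Longrightarrow> p \<le> r \<Longrightarrow> r \<le> q \<Longrightarrow> q \<le> t \<Longrightarrow> q - p \<le> h \<Longrightarrow>
      norm (disp y p - disp y r) \<le> e \<and> inner (vel y q - vel y r) (vel y r) \<le> e"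
proof -
  obtain B where B: "0 \<le> B" "\<And>r. r \<in> {s..t} \<Longrightarrow> norm (disp y r) \<le> B"
    "\<And>r. r \<in> {s..t} \<Longrightarrow> norm (vel y r) \<le> B"
    by (rule trajectory_bounded[OF assms(1), of t y]) iprover
  have "continuous_on {s..t} (disp y)" "continuous_on {s..t} (vel y)"
    using solution(1,2)[of y] assms(1) by (auto intro: continuous_on_subset)
  then have "uniformly_continuous_on {s..t} (disp y)" "uniformly_continuous_on {s..t} (vel y)"
    by (simp_all add: compact_uniformly_continuous)
  moreover have "0 < e / (B + 1)"
    using assms(2) B(1) by simp
  ultimately obtain h1 h2 where h1: "0 < h1"
      "\<And>r r'. r \<in> {s..t} \<Longrightarrow> r' \<in> {s..t} \<Longrightarrow> dist r' r < h1 \<Longrightarrow> dist (disp y r') (disp y r) < e"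
    and h2: "0 < h2"
      "\<And>r r'. r \<in> {s..t} \<Longrightarrow> r' \<in> {s..t} \<Longrightarrow> dist r' r < h2 \<Longrightarrow> dist (vel y r') (vel y r) < e / (B + 1)"
    using assms(2) unfolding uniformly_continuous_on_def by metis
  have "norm (disp y p - disp y r) \<le> e \<and> inner (vel y q - vel y r) (vel y r) \<le> e"
    if "s \<le> p" "p \<le> r" "r \<le> q" "q \<le> t" "q - p \<le> min h1 h2 / 2" for p q r
  proof
    have "dist p r < h1" "dist q r < h2"
      using that h1(1) h2(1) by (auto simp: dist_real_def)
    then have "dist (disp y p) (disp y r) < e" "dist (vel y q) (vel y r) < e / (B + 1)"
      using h1(2)[of r p] h2(2)[of r q] that by auto
    then show "norm (disp y p - disp y r) \<le> e"
      by (simp add: dist_norm)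
    have "inner (vel y q - vel y r) (vel y r) \<le> norm (vel y q - vel y r) * norm (vel y r)"
      by (rule norm_cauchy_schwarz)
    also have "\<dots> \<le> e / (B + 1) * B"
      using \<open>dist (vel y q) (vel y r) < e / (B + 1)\<close> B(3)[of r] that \<open>0 < e / (B + 1)\<close>
      by (intro mult_mono) (auto simp: dist_norm)
    also have "\<dots> \<le> e"
      using assms(2) B(1) by (simp add: field_simps)
    finally show "inner (vel y q - vel y r) (vel y r) \<le> e" .
  qed
  moreover have "0 < min h1 h2 / 2"
    using h1(1) h2(1) by simp
  ultimately show ?thesis
    using that by blast
qed

text \<open>The weak formulation only yields increments of \<open>(u\<^sub>t, w)\<close> for a fixed test function \<open>w\<close>:
  on short intervals the multiplier \<open>u\<close> is frozen at the left endpoint, and the errors are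
  controlled by uniform continuity of the trajectory.\<close>

lemma multiplier_ineq_approx:
  assumes "0 \<le> s" "s \<le> t" "0 < e"
    and "G integrable_on {s..t}" "\<Lambda> integrable_on {s..t}" "\<And>r. 0 \<le> \<Lambda> r"
    and G: "AE r in lborel. r \<in> {s..t} \<longrightarrow> (norm (vel y r))\<^sup>2 + weak_rhs y r (disp y r) \<le> G r"
    and \<Lambda>: "AE r in lborel. r \<in> {s..t} \<longrightarrow> (\<forall>z. \<bar>weak_rhs y r z\<bar> \<le> \<Lambda> r * norm z)"
  shows "multiplier y t - multiplier y s \<le> integral {s..t} (\<lambda>r. G r + e * \<Lambda> r + e)"
proof -
  obtain h where "0 < h" and close: "\<And>p q r. s \<le> p \<Longrightarrow> p \<le> r \<Longrightarrow> r \<le> q \<Longrightarrow> q \<le> t \<Longrightarrow> q - p \<le> h \<Longrightarrow>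
      norm (disp y p - disp y r) \<le> e \<and> inner (vel y q - vel y r) (vel y r) \<le> e"
    by (rule trajectory_locally_close[OF assms(1,3), of t y]) iprover
  have integrable: "(\<lambda>r. G r + e * \<Lambda> r + e) integrable_on {s..t}"
    by (intro integrable_add integrable_on_mult_right integrable_const_ivl assms(4,5))
  show ?thesis
  proof (rule increment_le_additive_of_local[OF _ \<open>0 < h\<close> _ assms(2)])
    fix p q r
    assume "s \<le> p" "p \<le> q" "q \<le> r" "r \<le> t"
    then show "integral {p..r} (\<lambda>r. G r + e * \<Lambda> r + e)
      = integral {p..q} (\<lambda>r. G r + e * \<Lambda> r + e) + integral {q..r} (\<lambda>r. G r + e * \<Lambda> r + e)"
      using integrable_subinterval_real[OF integrable, of p r]
      by (simp add: Henstock_Kurzweil_Integration.integral_combine[symmetric])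
  next
    fix p q
    assume pq: "s \<le> p" "p \<le> q" "q \<le> t" "q - p \<le> h"
    then have sub: "{p..q} \<subseteq> {s..t}"
      by auto
    show "multiplier y q - multiplier y p \<le> integral {p..q} (\<lambda>r. G r + e * \<Lambda> r + e)"
    proof (rule multiplier_increment_le)
      show "0 \<le> p"
        using pq assms(1) by simp
      show "G integrable_on {p..q}" "\<Lambda> integrable_on {p..q}"
        using integrable_subinterval_real[OF assms(4) sub] integrable_subinterval_real[OF assms(5) sub] .
      show "AE r in lborel. r \<in> {p..q} \<longrightarrow> (norm (vel y r))\<^sup>2 + weak_rhs y r (disp y r) \<le> G r"
        by (rule eventually_mono[OF G]) (use sub in blast)
      show "AE r in lborel. r \<in> {p..q} \<longrightarrow> (\<forall>z. \<bar>weak_rhs y r z\<bar> \<le> \<Lambda> r * norm z)"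
        by (rule eventually_mono[OF \<Lambda>]) (use sub in blast)
    qed (use pq close assms(6) in auto)
  qed
qed

lemma multiplier_ineq:
  assumes "0 \<le> s" "s \<le> t" and "G integrable_on {s..t}"
    and G: "AE r in lborel. r \<in> {s..t} \<longrightarrow> (norm (vel y r))\<^sup>2 + weak_rhs y r (disp y r) \<le> G r"
  shows "multiplier y t - multiplier y s \<le> integral {s..t} G"
proof -
  obtain \<Lambda> where \<Lambda>: "\<And>r. 0 \<le> \<Lambda> r" "\<Lambda> integrable_on {s..t}"
    "AE r in lborel. r \<in> {s..t} \<longrightarrow> (\<forall>z. \<bar>weak_rhs y r z\<bar> \<le> \<Lambda> r * norm z)"
    by (rule weak_rhs_bound[OF assms(1), of t y]) iprover
  define X where "X = integral {s..t} \<Lambda> + (t - s)"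
  have "0 \<le> X"
    unfolding X_def using integral_nonneg[OF \<Lambda>(2)] \<Lambda>(1) assms(2) by force
  have slack: "multiplier y t - multiplier y s \<le> integral {s..t} G + e * X" if "0 < e" for e
  proof -
    have e\<Lambda>: "(\<lambda>r. e * \<Lambda> r) integrable_on {s..t}"
      by (rule integrable_on_mult_right[OF \<Lambda>(2)])
    have "integral {s..t} (\<lambda>r. G r + e * \<Lambda> r + e) = integral {s..t} (\<lambda>r. G r + e * \<Lambda> r) + integral {s..t} (\<lambda>r. e)"
      by (rule integral_add[OF integrable_add[OF assms(3) e\<Lambda>] integrable_const_ivl])
    moreover have "integral {s..t} (\<lambda>r. G r + e * \<Lambda> r) = integral {s..t} G + e * integral {s..t} \<Lambda>"
      using integral_add[OF assms(3) e\<Lambda>] by simp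
    ultimately have "integral {s..t} (\<lambda>r. G r + e * \<Lambda> r + e) = integral {s..t} G + e * X"
      unfolding X_def using assms(2) by (simp add: algebra_simps)
    then show ?thesis
      using multiplier_ineq_approx[OF assms(1,2) that assms(3) \<Lambda>(2,1) G \<Lambda>(3)] by simp
  qed
  show ?thesis
  proof (rule field_le_epsilon)
    fix e :: real
    assume "0 < e"
    then have "multiplier y t - multiplier y s \<le> integral {s..t} G + e / (X + 1) * X"
      using slack[of "e / (X + 1)"] \<open>0 \<le> X\<close> by simp
    also have "e / (X + 1) * X \<le> e"
      using \<open>0 < e\<close> \<open>0 \<le> X\<close> by (simp add: field_simps)
    finally show "multiplier y t - multiplier y s \<le> integral {s..t} G + e"
      by simp
  qed
qed

definition "\<theta> = min (c2 / 2) ((1 - \<eta>2) / 2)"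

definition "growth R = (1 + 2 * R + 2 * cP) powr \<gamma>"

lemma \<theta>: "0 < \<theta>" "\<theta> \<le> c2 / 2" "\<theta> \<le> (1 - \<eta>2) / 2"
  using AB2_ii(2,3) unfolding \<theta>_def by (auto simp: min_def)

lemma growth_ge_1: "0 \<le> R \<Longrightarrow> 1 \<le> growth R"
  unfolding growth_def using cP_nonneg \<gamma> by (intro ge_one_powr_ge_zero) auto

lemma multiplier_rate_pointwise:
  assumes "energy_full Pi0 Pi1 u (\<iota> v) \<le> R"
  shows "(norm (\<iota> v))\<^sup>2 - (norm u)\<^sup>2 - k * D v u + inner (F u) (\<iota> u)
    \<le> 2 * c0 + \<theta> * cP + c3 - \<theta> * energy_full Pi0 Pi1 u (\<iota> v) + (2 * c1 + c4 * growth R) * D v v"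
proof -
  let ?E = "energy_full Pi0 Pi1 u (\<iota> v)"
  have "(1 + energy_E Pi0 u (\<iota> v)) powr \<gamma> \<le> growth R"
    unfolding growth_def using energy_E_bounds(1)[of u "\<iota> v"] energy_E_nonneg[of u "\<iota> v"] assms \<gamma>
    by (intro powr_mono2) auto
  then have weight: "c4 * (1 + energy_E Pi0 u (\<iota> v)) powr \<gamma> * D v v \<le> c4 * growth R * D v v"
    using AB2_ii(5) D_nonneg[of v] by (intro mult_right_mono mult_left_mono) auto
  have "Pi0 u + Pi1 u - (norm u)\<^sup>2 / 4 - cP \<le> 5/4 * Pi0 u"
    using Pi1_bound[of u] unfolding abs_le_iff by argo
  then have "\<theta> * (Pi0 u + Pi1 u - (norm u)\<^sup>2 / 4 - cP) \<le> \<theta> * (5/4) * Pi0 u"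
    using \<theta>(1) by (simp add: mult_left_mono)
  also have "\<dots> \<le> c2 * Pi0 u"
    using \<theta>(2) AB2_ii(3) Pi0_nonneg[of u] by (intro mult_right_mono) auto
  finally have Pi0_part: "- c2 * Pi0 u \<le> - \<theta> * ?E + \<theta> * (3/4 * (norm u)\<^sup>2) + \<theta> * ((norm (\<iota> v))\<^sup>2 / 2) + \<theta> * cP"
    unfolding energy_full_def energy_E_def by (simp add: algebra_simps)
  have "\<theta> * (3/4) * (norm u)\<^sup>2 \<le> (1 - \<eta>2) * (norm u)\<^sup>2"
    using \<theta>(1,3) by (intro mult_right_mono) auto
  moreover have "\<theta> * ((norm (\<iota> v))\<^sup>2 / 2) \<le> (norm (\<iota> v))\<^sup>2 / 2"
    using \<theta>(1,3) AB2_ii(1) by (intro mult_left_le_one_le) auto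
  ultimately show ?thesis
    using AB2_ii(6)[where u = u and v = v] F_decomp[of u u] AB2_i(3)[of v] weight Pi0_part
      AB2_i(1) mult_nonneg_nonneg[OF less_imp_le[OF AB2_i(2)] D_nonneg[of v]]
    by (simp add: algebra_simps)
qed

lemma multiplier_rate_bound:
  assumes "0 \<le> s" and R: "\<And>r. r \<in> {s..t} \<Longrightarrow> energy y r \<le> R"
  shows "AE r in lborel. r \<in> {s..t} \<longrightarrow> (norm (vel y r))\<^sup>2 + weak_rhs y r (disp y r)
    \<le> 2 * c0 + \<theta> * cP + c3 - \<theta> * energy y r + (2 * c1 + c4 * growth R) * damping y r"
  using vel_V_AE[of y]
proof eventually_elim
  case (elim r)
  show ?case
  proof
    assume r: "r \<in> {s..t}"
    then have "\<iota> (vel_V y r) = vel y r"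
      using elim assms(1) by simp
    then show "(norm (vel y r))\<^sup>2 + weak_rhs y r (disp y r)
      \<le> 2 * c0 + \<theta> * cP + c3 - \<theta> * energy y r + (2 * c1 + c4 * growth R) * damping y r"
      using multiplier_rate_pointwise[of "disp y r" "vel_V y r" R] R[OF r]
      unfolding weak_rhs_def energy_def damping_def by (simp add: power2_norm_eq_inner)
  qed
qed

lemma N_power_bound:
  assumes "0 < \<delta>" "\<delta> \<le> 1"
  shows "AE r in lborel. 0 \<le> r \<longrightarrow> N_power y r \<le> \<eta>3 * k * damping y r + \<delta> * (2 * energy y r + 2 * cP) + b (1 / \<delta>)"
  using vel_V_AE[of y]
proof eventually_elim
  case (elim r)
  show ?case
  proof
    assume "0 \<le> r"
    then have "\<iota> (vel_V y r) = vel y r"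
      using elim by simp
    moreover have "\<delta> * energy_E Pi0 (disp y r) (vel y r) \<le> \<delta> * (2 * energy y r + 2 * cP)"
      using energy_E_bounds(1) assms unfolding energy_def by (intro mult_left_mono) auto
    ultimately show "N_power y r \<le> \<eta>3 * k * damping y r + \<delta> * (2 * energy y r + 2 * cP) + b (1 / \<delta>)"
      using AB2_iii(4)[OF assms, of "disp y r" "vel_V y r"] unfolding N_power_def damping_def by simp
  qed
qed

lemma multiplier_bound: "\<bar>multiplier y t\<bar> \<le> emb_const * (2 * energy y t + 2 * cP)"
proof -
  let ?u = "disp y t" and ?w = "vel y t"
  have "\<bar>multiplier y t\<bar> \<le> norm ?w * norm (\<iota> ?u)"
    unfolding multiplier_def by (rule Cauchy_Schwarz_ineq2)
  also have "\<dots> \<le> emb_const * (norm ?w * norm ?u)"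
    using mult_left_mono[OF emb_const(2)[of ?u] norm_ge_zero[of ?w]] by (simp add: algebra_simps)
  also have "\<dots> \<le> emb_const * (((norm ?u)\<^sup>2 + (norm ?w)\<^sup>2) / 2)"
    using emb_const(1) sum_squares_bound[of "norm ?u" "norm ?w"] by (simp add: mult.commute)
  also have "\<dots> \<le> emb_const * (2 * energy y t + 2 * cP)"
    using energy_E_bounds(1,3)[of ?u ?w] emb_const(1) unfolding energy_def by (intro mult_left_mono) auto
  finally show ?thesis .
qed

definition "lyapunov \<epsilon> y t = energy y t + \<epsilon> * multiplier y t"

definition "forcing \<epsilon> = \<epsilon> * \<theta> * cP / 2 + b (4 / (\<epsilon> * \<theta>)) + \<epsilon> * (2 * c0 + \<theta> * cP + c3) + \<epsilon> * \<theta> * cP / 10"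

lemma lyapunov_continuous: "continuous_on {0..} (lyapunov \<epsilon> y)"
  unfolding lyapunov_def[abs_def] by (intro continuous_intros energy_continuous multiplier_continuous)

lemma lyapunov_bounds:
  assumes "0 \<le> \<epsilon>" "\<epsilon> * emb_const \<le> 1/8"
  shows "lyapunov \<epsilon> y t \<le> 5/4 * energy y t + cP / 4" "3/4 * energy y t - cP / 4 \<le> lyapunov \<epsilon> y t"
proof -
  have "\<bar>\<epsilon> * multiplier y t\<bar> \<le> (\<epsilon> * emb_const) * (2 * energy y t + 2 * cP)"
    using mult_left_mono[OF multiplier_bound[of y t] assms(1)] assms(1) by (simp add: abs_mult mult.assoc)
  also have "\<dots> \<le> 1/8 * (2 * energy y t + 2 * cP)"
    using assms(2) energy_lower_bound[of y t] by (intro mult_right_mono) auto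
  finally show "lyapunov \<epsilon> y t \<le> 5/4 * energy y t + cP / 4" "3/4 * energy y t - cP / 4 \<le> lyapunov \<epsilon> y t"
    unfolding lyapunov_def abs_le_iff by argo+
qed

lemma energy_increment_le:
  assumes "0 \<le> s" "s \<le> t" "0 < \<delta>" "\<delta> \<le> 1"
  shows "energy y t - energy y s \<le> - k * integral {s..t} (damping y)
    + integral {s..t} (\<lambda>r. \<eta>3 * k * damping y r + \<delta> * (2 * energy y r + 2 * cP) + b (1 / \<delta>))"
proof -
  have "(\<lambda>r. \<eta>3 * k * damping y r + \<delta> * (2 * energy y r + 2 * cP) + b (1 / \<delta>)) integrable_on {s..t}"
    using damping_integrable continuous_on_atLeast_integrable[OF energy_continuous] assms(1)
    by (intro integrable_add integrable_on_mult_right integrable_const_ivl) auto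
  then have "integral {s..t} (N_power y)
      \<le> integral {s..t} (\<lambda>r. \<eta>3 * k * damping y r + \<delta> * (2 * energy y r + 2 * cP) + b (1 / \<delta>))"
    using N_power_bound[OF assms(3,4), of y] assms(1)
    by (intro integral_le_AE_lborel N_power_integrable) (auto elim!: eventually_mono)
  then show ?thesis
    using energy_increment[OF assms(1,2), of y] by linarith
qed

lemma lyapunov_ineq:
  assumes "0 \<le> s" "s \<le> t" and R: "\<And>r. r \<in> {s..t} \<Longrightarrow> energy y r \<le> R"
    and \<epsilon>: "0 < \<epsilon>" "\<epsilon> * emb_const \<le> 1/8" "\<epsilon> * \<theta> \<le> 4" "\<epsilon> * (2 * c1 + c4 * growth R) \<le> k * (1 - \<eta>3)"
  shows "lyapunov \<epsilon> y t - lyapunov \<epsilon> y s \<le> integral {s..t} (\<lambda>r. forcing \<epsilon> - (2 * \<epsilon> * \<theta> / 5) * lyapunov \<epsilon> y r)"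
proof -
  define \<delta> where "\<delta> = \<epsilon> * \<theta> / 4"
  have "0 < \<delta>" "\<delta> \<le> 1"
    using \<epsilon> \<theta>(1) by (auto simp: \<delta>_def)
  define N_bound where "N_bound r = \<eta>3 * k * damping y r + \<delta> * (2 * energy y r + 2 * cP) + b (1 / \<delta>)" for r
  define G where "G r = 2 * c0 + \<theta> * cP + c3 - \<theta> * energy y r + (2 * c1 + c4 * growth R) * damping y r" for r
  have damping: "damping y integrable_on {s..t}"
    using damping_integrable assms(1) by blast
  have energy: "energy y integrable_on {s..t}"
    using continuous_on_atLeast_integrable[OF energy_continuous assms(1)] .
  have N_bound_int: "N_bound integrable_on {s..t}"
    unfolding N_bound_def by (intro integrable_add integrable_on_mult_right integrable_const_ivl damping energy)
  have G_int: "G integrable_on {s..t}"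
    unfolding G_def by (intro integrable_add integrable_diff integrable_on_mult_right integrable_const_ivl damping energy)
  have energy_part: "energy y t - energy y s \<le> - k * integral {s..t} (damping y) + integral {s..t} N_bound"
    unfolding N_bound_def by (rule energy_increment_le[OF assms(1,2) \<open>0 < \<delta>\<close> \<open>\<delta> \<le> 1\<close>])
  have "multiplier y t - multiplier y s \<le> integral {s..t} G"
    by (rule multiplier_ineq[OF assms(1,2) G_int]) (use multiplier_rate_bound[OF assms(1) R] in \<open>simp add: G_def\<close>)
  then have multiplier_part: "\<epsilon> * (multiplier y t - multiplier y s) \<le> \<epsilon> * integral {s..t} G"
    using \<epsilon>(1) by simp
  have rate: "- k * damping y r + N_bound r + \<epsilon> * G r \<le> forcing \<epsilon> - (2 * \<epsilon> * \<theta> / 5) * lyapunov \<epsilon> y r" for r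
  proof -
    have "\<epsilon> * (2 * c1 + c4 * growth R) * damping y r \<le> k * (1 - \<eta>3) * damping y r"
      using mult_right_mono[OF \<epsilon>(4) damping_nonneg] .
    moreover have "\<delta> * lyapunov \<epsilon> y r \<le> \<delta> * (5/4 * energy y r + cP / 4)"
      using lyapunov_bounds(1)[of \<epsilon> y r] \<epsilon> \<open>0 < \<delta>\<close> by (intro mult_left_mono) auto
    moreover have "b (1 / \<delta>) = b (4 / (\<epsilon> * \<theta>))"
      by (simp add: \<delta>_def)
    ultimately show ?thesis
      unfolding N_bound_def G_def forcing_def \<delta>_def by (simp add: algebra_simps)
  qed
  have "lyapunov \<epsilon> y t - lyapunov \<epsilon> y s = (energy y t - energy y s) + \<epsilon> * (multiplier y t - multiplier y s)"
    unfolding lyapunov_def by (simp add: algebra_simps)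
  also have "\<dots> \<le> - k * integral {s..t} (damping y) + integral {s..t} N_bound + \<epsilon> * integral {s..t} G"
    using energy_part multiplier_part by linarith
  also have "\<dots> = integral {s..t} (\<lambda>r. - k * damping y r + N_bound r + \<epsilon> * G r)"
    using integral_add[OF integrable_add[OF integrable_on_mult_right[OF damping, of "- k"] N_bound_int]
        integrable_on_mult_right[OF G_int, of \<epsilon>]]
      integral_add[OF integrable_on_mult_right[OF damping, of "- k"] N_bound_int]
    by simp
  also have "\<dots> \<le> integral {s..t} (\<lambda>r. forcing \<epsilon> - (2 * \<epsilon> * \<theta> / 5) * lyapunov \<epsilon> y r)"
    by (intro integral_le rate integrable_add integrable_diff integrable_on_mult_right integrable_const_ivl
        N_bound_int G_int damping continuous_on_atLeast_integrable[OF lyapunov_continuous assms(1)])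
  finally show ?thesis .
qed

definition "eps R = min (min (1 / (8 * emb_const)) (4 / \<theta>)) (k * (1 - \<eta>3) / (2 * c1 + c4 * growth R))"

definition "level R = forcing (eps R) / (2 * eps R * \<theta> / 5)"

definition "level_const = 3 * cP / 2 + 5 / (2 * \<theta>) * (2 * c0 + \<theta> * cP + c3)"

lemma eps:
  assumes "0 \<le> R"
  shows "0 < eps R" "eps R * emb_const \<le> 1/8" "eps R * \<theta> \<le> 4"
    "eps R * (2 * c1 + c4 * growth R) \<le> k * (1 - \<eta>3)"
proof -
  have "0 < 2 * c1 + c4 * growth R"
    using AB2_i(2) AB2_ii(5) growth_ge_1[OF assms] by (simp add: add_pos_nonneg)
  then show "0 < eps R"
    unfolding eps_def using emb_const(1) \<theta>(1) k_pos AB2_iii(1) by simp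
  have "eps R \<le> k * (1 - \<eta>3) / (2 * c1 + c4 * growth R)"
    unfolding eps_def by simp
  then show "eps R * (2 * c1 + c4 * growth R) \<le> k * (1 - \<eta>3)"
    using \<open>0 < 2 * c1 + c4 * growth R\<close> by (simp add: field_simps)
  have "eps R \<le> 1 / (8 * emb_const)"
    unfolding eps_def by simp
  then show "eps R * emb_const \<le> 1/8"
    using emb_const(1) by (simp add: field_simps)
  have "eps R \<le> 4 / \<theta>"
    unfolding eps_def by simp
  then show "eps R * \<theta> \<le> 4"
    using \<theta>(1) by (simp add: field_simps)
qed

lemma level_eq:
  assumes "0 \<le> R"
  shows "level R = level_const + 5/8 * (4 / (eps R * \<theta>) * b (4 / (eps R * \<theta>)))"
  using eps(1)[OF assms] \<theta>(1) unfolding level_def forcing_def level_const_def by (simp add: field_simps)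

lemma level_nonneg:
  assumes "0 \<le> R"
  shows "0 \<le> level R"
proof -
  have "0 < 4 / (eps R * \<theta>)"
    using eps(1)[OF assms] \<theta>(1) by simp
  then have "0 \<le> 4 / (eps R * \<theta>) * b (4 / (eps R * \<theta>))"
    using AB2_iii(3) by simp
  moreover have "0 \<le> level_const"
    unfolding level_const_def using cP_nonneg \<theta>(1) AB2_i(1) AB2_ii(4) by simp
  ultimately show ?thesis
    unfolding level_eq[OF assms] by simp
qed

lemma inverse_eps_bound:
  obtains A where "0 < A" "\<And>R. 0 \<le> R \<Longrightarrow> 4 / (eps R * \<theta>) \<le> A * growth R"
proof -
  define A where "A = 4 / \<theta> * (8 * emb_const + \<theta> / 4 + (2 * c1 + c4) / (k * (1 - \<eta>3)))"
  have k\<eta>: "0 < k * (1 - \<eta>3)"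
    using k_pos AB2_iii(1) by simp
  have "4 / (eps R * \<theta>) \<le> A * growth R" if "0 \<le> R" for R
  proof -
    have g: "1 \<le> growth R"
      using growth_ge_1[OF that] .
    have "0 < 2 * c1 + c4 * growth R"
      using AB2_i(2) AB2_ii(5) g by (simp add: add_pos_nonneg)
    then have "1 / eps R \<le> 1 / (1 / (8 * emb_const)) + 1 / (4 / \<theta>) + 1 / (k * (1 - \<eta>3) / (2 * c1 + c4 * growth R))"
      unfolding eps_def using emb_const(1) \<theta>(1) k\<eta> by (intro inverse_min3_le) auto
    also have "\<dots> = 8 * emb_const + \<theta> / 4 + (2 * c1 + c4 * growth R) / (k * (1 - \<eta>3))"
      by simp
    also have "\<dots> \<le> (8 * emb_const + \<theta> / 4 + (2 * c1 + c4) / (k * (1 - \<eta>3))) * growth R"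
    proof -
      have "2 * c1 + c4 * growth R \<le> (2 * c1 + c4) * growth R"
        using g AB2_i(2) by (simp add: algebra_simps)
      then have "(2 * c1 + c4 * growth R) / (k * (1 - \<eta>3)) \<le> (2 * c1 + c4) * growth R / (k * (1 - \<eta>3))"
        using k\<eta> by (simp add: divide_right_mono)
      moreover have "8 * emb_const \<le> 8 * emb_const * growth R" "\<theta> / 4 \<le> \<theta> / 4 * growth R"
        using g emb_const(1) \<theta>(1) by simp_all
      ultimately show ?thesis
        by (simp add: algebra_simps)
    qed
    finally have "1 / eps R \<le> (8 * emb_const + \<theta> / 4 + (2 * c1 + c4) / (k * (1 - \<eta>3))) * growth R" .
    then have "4 / \<theta> * (1 / eps R) \<le> 4 / \<theta> * ((8 * emb_const + \<theta> / 4 + (2 * c1 + c4) / (k * (1 - \<eta>3))) * growth R)"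
      using \<theta>(1) by (intro mult_left_mono) auto
    then show ?thesis
      unfolding A_def by (simp add: field_simps)
  qed
  moreover have "0 < A"
    unfolding A_def using \<theta>(1) emb_const(1) AB2_i(2) AB2_ii(5) k\<eta> by (intro mult_pos_pos add_pos_nonneg add_pos_pos) auto
  ultimately show ?thesis
    using that by blast
qed

lemma times_b_mono: "0 \<le> x \<Longrightarrow> x \<le> y \<Longrightarrow> x * b x \<le> y * b y"
  using AB2_iii(2,3) by (intro mult_mono) (auto intro: mono_onD)

lemma balancing_sublinear:
  assumes "0 < \<gamma>" "0 < A" "0 < c"
  obtains B1 where "\<And>B. B1 \<le> B \<Longrightarrow> A * B powr \<gamma> * b (A * B powr \<gamma>) \<le> c * B"
proof -
  define \<eta> where "\<eta> = c / A powr (1 / \<gamma>)"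
  have "0 < \<eta>"
    using assms by (simp add: \<eta>_def)
  then have "\<forall>\<^sub>F x in at_top. dist (x powr (1 - 1 / \<gamma>) * b x) 0 < \<eta>"
    using tendstoD[OF AB2_iii(5)[OF assms(1)]] by blast
  then obtain X0 where X0: "\<And>x. X0 \<le> x \<Longrightarrow> \<bar>x powr (1 - 1 / \<gamma>) * b x\<bar> < \<eta>"
    unfolding eventually_at_top_linorder by auto
  define X1 where "X1 = max X0 1"
  have "A * B powr \<gamma> * b (A * B powr \<gamma>) \<le> c * B" if B: "(X1 / A) powr (1 / \<gamma>) \<le> B" for B
  proof -
    define Y where "Y = A * B powr \<gamma>"
    have "0 < (X1 / A) powr (1 / \<gamma>)"
      using assms(2) by (simp add: X1_def)
    then have "0 < B"
      using B by linarith
    then have "((X1 / A) powr (1 / \<gamma>)) powr \<gamma> \<le> B powr \<gamma>"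
      using B assms(1) by (intro powr_mono2) auto
    then have "X1 \<le> Y"
      using assms(1,2) by (simp add: Y_def powr_powr X1_def field_simps)
    then have "0 < Y" "\<bar>Y powr (1 - 1 / \<gamma>) * b Y\<bar> < \<eta>"
      using X0 by (auto simp: X1_def)
    have "Y * b Y = Y powr (1 / \<gamma>) * (Y powr (1 - 1 / \<gamma>) * b Y)"
      using \<open>0 < Y\<close> by (simp add: powr_add[symmetric])
    also have "\<dots> \<le> Y powr (1 / \<gamma>) * \<eta>"
      using \<open>\<bar>Y powr (1 - 1 / \<gamma>) * b Y\<bar> < \<eta>\<close> by (intro mult_left_mono) auto
    also have "\<dots> = c * B"
      unfolding Y_def \<eta>_def using assms \<open>0 < B\<close> by (simp add: powr_mult powr_powr)
    finally show ?thesis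
      unfolding Y_def .
  qed
  then show ?thesis
    using that by blast
qed

lemma level_eventually_small: "\<exists>R1\<ge>0. \<forall>R\<ge>R1. level R \<le> R / 12"
proof -
  define y where "y R = 4 / (eps R * \<theta>)" for R
  obtain A where A: "0 < A" "\<And>R. 0 \<le> R \<Longrightarrow> y R \<le> A * growth R"
    unfolding y_def using inverse_eps_bound by blast
  have y_nonneg: "0 \<le> y R" if "0 \<le> R" for R
    unfolding y_def using eps(1)[OF that] \<theta>(1) by simp
  have "\<exists>R2. \<forall>R\<ge>R2. 0 \<le> R \<longrightarrow> 5/8 * (y R * b (y R)) \<le> R / 24"
  proof (cases "\<gamma> = 0")
    case True
    have "growth R = 1" if "0 \<le> R" for R
      unfolding growth_def using True that cP_nonneg by simp
    then have "y R * b (y R) \<le> A * b A" if "0 \<le> R" for R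
      using A(2)[OF that] y_nonneg[OF that] that by (intro times_b_mono) auto
    then show ?thesis
      by (intro exI[of _ "15 * (A * b A)"]) force
  next
    case False
    then have "0 < \<gamma>"
      using \<gamma> by simp
    obtain B1 where B1: "\<And>B. B1 \<le> B \<Longrightarrow> A * B powr \<gamma> * b (A * B powr \<gamma>) \<le> 1 / 100 * B"
      using balancing_sublinear[OF \<open>0 < \<gamma>\<close> A(1), of "1 / 100"] by auto
    have "5/8 * (y R * b (y R)) \<le> R / 24" if "max B1 (1 + 2 * cP) \<le> R" for R
    proof -
      have "0 \<le> R" "1 + 2 * cP \<le> R" "B1 \<le> 1 + 2 * R + 2 * cP"
        using that cP_nonneg by auto
      then have "y R * b (y R) \<le> 1 / 100 * (1 + 2 * R + 2 * cP)"
        using A(2) y_nonneg B1 unfolding growth_def by (meson order_trans times_b_mono)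
      then show ?thesis
        using \<open>0 \<le> R\<close> \<open>1 + 2 * cP \<le> R\<close> by argo
    qed
    then show ?thesis
      by (intro exI[of _ "max B1 (1 + 2 * cP)"]) auto
  qed
  then obtain R2 where R2: "\<And>R. R2 \<le> R \<Longrightarrow> 0 \<le> R \<Longrightarrow> 5/8 * (y R * b (y R)) \<le> R / 24"
    by blast
  have "level R \<le> R / 12" if "max (max 0 R2) (24 * level_const) \<le> R" for R
    using level_eq[of R] R2[of R] that unfolding y_def by auto
  then show ?thesis
    by (intro exI[of _ "max (max 0 R2) (24 * level_const)"]) auto
qed

definition "R_bal = (SOME R1. 0 \<le> R1 \<and> (\<forall>R\<ge>R1. level R \<le> R / 12))"

lemma R_bal: "0 \<le> R_bal" "R_bal \<le> R \<Longrightarrow> level R \<le> R / 12"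
  using someI_ex[OF level_eventually_small] unfolding R_bal_def[symmetric] by auto

lemma lyapunov_decay:
  assumes "0 \<le> R" "0 \<le> p" "p \<le> q" and R: "\<And>r. r \<in> {p..q} \<Longrightarrow> energy y r \<le> R"
  shows "(lyapunov (eps R) y q - level R) - (lyapunov (eps R) y p - level R)
    \<le> - (2 * eps R * \<theta> / 5) * integral {p..q} (\<lambda>r. lyapunov (eps R) y r - level R)"
proof -
  let ?\<epsilon> = "eps R"
  define \<alpha> where "\<alpha> = 2 * eps R * \<theta> / 5"
  have "forcing ?\<epsilon> = \<alpha> * level R"
    unfolding level_def \<alpha>_def using eps(1)[OF assms(1)] \<theta>(1) by simp
  moreover have "lyapunov ?\<epsilon> y q - lyapunov ?\<epsilon> y p \<le> integral {p..q} (\<lambda>r. forcing ?\<epsilon> - \<alpha> * lyapunov ?\<epsilon> y r)"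
    using lyapunov_ineq[OF assms(2,3) R] eps[OF assms(1)] unfolding \<alpha>_def by blast
  moreover have "integral {p..q} (\<lambda>r. \<alpha> * level R - \<alpha> * lyapunov ?\<epsilon> y r)
      = - \<alpha> * integral {p..q} (\<lambda>r. lyapunov ?\<epsilon> y r - level R)"
  proof -
    have int: "lyapunov ?\<epsilon> y integrable_on {p..q}"
      by (rule continuous_on_atLeast_integrable[OF lyapunov_continuous assms(2)])
    have "integral {p..q} (\<lambda>r. \<alpha> * level R - \<alpha> * lyapunov ?\<epsilon> y r)
        = \<alpha> * level R * (q - p) - \<alpha> * integral {p..q} (lyapunov ?\<epsilon> y)"
      using integral_diff[OF integrable_const_ivl[of "\<alpha> * level R"] integrable_on_mult_right[OF int, of \<alpha>]]
        assms(3) by simp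
    also have "integral {p..q} (lyapunov ?\<epsilon> y) = integral {p..q} (\<lambda>r. lyapunov ?\<epsilon> y r - level R) + level R * (q - p)"
      using integral_diff[OF int integrable_const_ivl[of "level R"]] assms(3) by simp
    finally show ?thesis
      by (simp add: algebra_simps)
  qed
  ultimately have "lyapunov ?\<epsilon> y q - lyapunov ?\<epsilon> y p \<le> - \<alpha> * integral {p..q} (\<lambda>r. lyapunov ?\<epsilon> y r - level R)"
    by simp
  then show ?thesis
    unfolding \<alpha>_def by simp
qed

definition "energy_ceiling \<rho> = 3 * \<rho> + cP + 1"

definition "\<rho>0 = max (4 + 2 * cP) R_bal"

lemma \<rho>0_pos: "0 < \<rho>0"
  unfolding \<rho>0_def using cP_nonneg by simp

lemma energy_stays_below:
  assumes "\<rho>0 \<le> \<rho>" "0 \<le> s" "energy y s \<le> \<rho>" "s \<le> t"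
  shows "energy y t < energy_ceiling \<rho>"
proof (rule continuous_induction_less[OF _ \<open>s \<le> t\<close>])
  let ?R = "energy_ceiling \<rho>"
  have \<rho>: "0 \<le> \<rho>" "R_bal \<le> \<rho>"
    using assms(1) cP_nonneg unfolding \<rho>0_def by auto
  then have R: "0 \<le> ?R" "R_bal \<le> ?R"
    using cP_nonneg unfolding energy_ceiling_def by auto
  let ?\<epsilon> = "eps ?R" and ?L = "level ?R"
  have L: "0 \<le> ?L" "?L \<le> ?R / 12"
    using level_nonneg[OF R(1)] R_bal(2)[OF R(2)] by auto
  show "continuous_on {s..t} (energy y)"
    using energy_continuous[of y] assms(2) by (auto intro: continuous_on_subset)
  show "energy y s < ?R"
    using assms(3) \<rho> cP_nonneg unfolding energy_ceiling_def by linarith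
  fix T
  assume T: "T \<in> {s..t}" and below: "\<And>r. r \<in> {s..T} \<Longrightarrow> energy y r \<le> ?R"
  define W where "W r = lyapunov ?\<epsilon> y r - ?L" for r
  have "W T \<le> max (W s) 0"
  proof (rule decay_ineq_stays_below[of s T W "2 * ?\<epsilon> * \<theta> / 5"])
    show "continuous_on {s..T} W"
      unfolding W_def using assms(2)
      by (intro continuous_intros continuous_on_subset[OF lyapunov_continuous]) auto
    show "0 \<le> 2 * ?\<epsilon> * \<theta> / 5"
      using eps(1)[OF R(1)] \<theta>(1) by simp
    show "W q - W p \<le> - (2 * ?\<epsilon> * \<theta> / 5) * integral {p..q} W" if "s \<le> p" "p \<le> q" "q \<le> T" for p q
      unfolding W_def using lyapunov_decay[OF R(1), of p q y] below that assms(2) by auto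
  qed (use T in auto)
  moreover have "lyapunov ?\<epsilon> y s \<le> 5/4 * energy y s + cP / 4" "3/4 * energy y T - cP / 4 \<le> lyapunov ?\<epsilon> y T"
    using lyapunov_bounds[of ?\<epsilon> y] eps(1,2)[OF R(1)] by simp_all
  ultimately show "energy y T < ?R"
    using L \<rho> cP_nonneg assms(3) unfolding W_def energy_ceiling_def by (auto simp: max_def split: if_splits)
qed

definition "descent_time \<rho> = (5/4 * \<rho> + cP / 4) / (2 * eps (energy_ceiling \<rho>) * \<theta> / 5)"

lemma descent_time_nonneg:
  assumes "\<rho>0 \<le> \<rho>"
  shows "0 \<le> descent_time \<rho>"
proof -
  have "0 \<le> \<rho>"
    using assms \<rho>0_pos by linarith
  then have "0 < eps (energy_ceiling \<rho>)"
    using cP_nonneg by (intro eps(1)) (simp add: energy_ceiling_def)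
  then show ?thesis
    unfolding descent_time_def using \<open>0 \<le> \<rho>\<close> cP_nonneg \<theta>(1) by simp
qed

lemma energy_drops:
  assumes "\<rho>0 \<le> \<rho>" "0 \<le> s" "energy y s \<le> \<rho>"
  shows "energy y (s + descent_time \<rho>) \<le> 3/4 * \<rho>"
proof -
  let ?R = "energy_ceiling \<rho>" and ?\<tau> = "descent_time \<rho>"
  have \<rho>: "R_bal \<le> \<rho>" "4 + 2 * cP \<le> \<rho>"
    using assms(1) unfolding \<rho>0_def by auto
  then have R: "0 \<le> ?R" "R_bal \<le> ?R"
    using cP_nonneg unfolding energy_ceiling_def by auto
  let ?\<epsilon> = "eps ?R" and ?L = "level ?R"
  define \<alpha> where "\<alpha> = 2 * ?\<epsilon> * \<theta> / 5"
  have "0 < \<alpha>"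
    unfolding \<alpha>_def using eps(1)[OF R(1)] \<theta>(1) by simp
  have L: "?L \<le> ?R / 12"
    using R_bal(2)[OF R(2)] .
  define W where "W r = lyapunov ?\<epsilon> y r - ?L" for r
  have "W (s + ?\<tau>) \<le> 1"
  proof (rule decay_ineq_reaches_below[OF _ \<open>0 < \<alpha>\<close> zero_less_one descent_time_nonneg[OF assms(1)]])
    show "continuous_on {s..s + ?\<tau>} W"
      unfolding W_def using assms(2)
      by (intro continuous_intros continuous_on_subset[OF lyapunov_continuous]) auto
    show "W q - W p \<le> - \<alpha> * integral {p..q} W" if "s \<le> p" "p \<le> q" "q \<le> s + ?\<tau>" for p q
      unfolding W_def \<alpha>_def using lyapunov_decay[OF R(1), of p q y] energy_stays_below[OF assms] that assms(2)
      by (simp add: less_imp_le)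
    have "lyapunov ?\<epsilon> y s \<le> 5/4 * energy y s + cP / 4"
      using lyapunov_bounds(1) eps(1,2)[OF R(1)] by simp
    moreover have "\<alpha> * 1 * ?\<tau> = 5/4 * \<rho> + cP / 4"
      unfolding descent_time_def \<alpha>_def[symmetric] using \<open>0 < \<alpha>\<close> by simp
    ultimately show "W s \<le> \<alpha> * 1 * ?\<tau>"
      unfolding W_def using level_nonneg[OF R(1)] assms(3) by linarith
  qed
  moreover have "3/4 * energy y (s + ?\<tau>) - cP / 4 \<le> lyapunov ?\<epsilon> y (s + ?\<tau>)"
    using lyapunov_bounds(2) eps(1,2)[OF R(1)] by simp
  ultimately show ?thesis
    using L \<rho>(2) cP_nonneg unfolding W_def energy_ceiling_def by argo
qed

lemma energy_absorbed:
  "\<exists>T\<ge>0. \<forall>y s. 0 \<le> s \<longrightarrow> energy y s \<le> (4/3)^n * \<rho>0 \<longrightarrow> (\<forall>t\<ge>s + T. energy y t < energy_ceiling \<rho>0)"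
proof (induction n)
  case 0
  show ?case
    by (intro exI[of _ 0]) (auto intro: energy_stays_below)
next
  case (Suc n)
  then obtain T where T: "0 \<le> T"
    "\<And>y s t. 0 \<le> s \<Longrightarrow> energy y s \<le> (4/3)^n * \<rho>0 \<Longrightarrow> s + T \<le> t \<Longrightarrow> energy y t < energy_ceiling \<rho>0"
    by blast
  define \<rho> where "\<rho> = (4/3)^Suc n * \<rho>0"
  have "1 \<le> (4/3 :: real)^Suc n"
    by (rule one_le_power) simp
  then have "\<rho>0 \<le> \<rho>"
    unfolding \<rho>_def using mult_right_mono[of 1 "(4/3)^Suc n" \<rho>0] \<rho>0_pos by simp
  have "energy y t < energy_ceiling \<rho>0"
    if "0 \<le> s" "energy y s \<le> \<rho>" "s + (descent_time \<rho> + T) \<le> t" for y s t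
  proof (rule T(2))
    show "0 \<le> s + descent_time \<rho>"
      using that(1) descent_time_nonneg[OF \<open>\<rho>0 \<le> \<rho>\<close>] by simp
    show "energy y (s + descent_time \<rho>) \<le> (4/3)^n * \<rho>0"
      using energy_drops[OF \<open>\<rho>0 \<le> \<rho>\<close> that(1,2)] by (simp add: \<rho>_def)
  qed (use that(3) in simp)
  moreover have "0 \<le> descent_time \<rho> + T"
    using T(1) descent_time_nonneg[OF \<open>\<rho>0 \<le> \<rho>\<close>] by simp
  ultimately show ?case
    unfolding \<rho>_def by blast
qed

lemma norm_le_energy: "(norm (S t y))\<^sup>2 \<le> 4 * energy y t + 4 * cP"
proof -
  have "(norm (S t y))\<^sup>2 = (norm (disp y t))\<^sup>2 + (norm (vel y t))\<^sup>2"
    unfolding disp_def vel_def by (rule power2_norm_prod)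
  then show ?thesis
    using energy_E_bounds(1,3)[of "disp y t" "vel y t"] unfolding energy_def by linarith
qed

lemma initial_energy_bounded:
  assumes "bounded B"
  obtains M where "\<And>y. y \<in> B \<Longrightarrow> energy y 0 \<le> M"
proof -
  obtain r where r: "\<And>y. y \<in> B \<Longrightarrow> norm y \<le> r"
    using assms unfolding bounded_iff by blast
  obtain P where P: "\<And>x. norm x \<le> r \<Longrightarrow> Pi0 x \<le> P"
    using Pi0_bound_on_ball by blast
  have "energy y 0 \<le> 3/2 * (r\<^sup>2 / 2 + P) + cP" if "y \<in> B" for y
  proof -
    have "(norm (fst y))\<^sup>2 + (norm (snd y))\<^sup>2 = (norm y)\<^sup>2"
      by (rule power2_norm_prod[symmetric])
    also have "\<dots> \<le> r\<^sup>2"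
      using r[OF that] by (intro power_mono) auto
    moreover have "norm (fst y) \<le> r"
      using r[OF that] norm_fst_le[of "fst y" "snd y"] by simp
    ultimately have "energy_E Pi0 (fst y) (snd y) \<le> r\<^sup>2 / 2 + P"
      using P[of "fst y"] unfolding energy_E_def by simp
    moreover have "energy y 0 = energy_full Pi0 Pi1 (fst y) (snd y)"
      using S_zero[of y] unfolding energy_def disp_def vel_def by simp
    ultimately show ?thesis
      using energy_E_bounds(2)[of "fst y" "snd y"] by argo
  qed
  then show ?thesis
    using that by blast
qed

lemma ultimately_bounded: "\<exists>R0>0. \<forall>B. bounded B \<longrightarrow> (\<exists>t0\<ge>0. \<forall>y\<in>B. \<forall>t\<ge>t0. norm (S t y) \<le> R0)"
proof -
  define R0 where "R0 = sqrt (4 * energy_ceiling \<rho>0 + 4 * cP) + 1"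
  have "\<exists>t0\<ge>0. \<forall>y\<in>B. \<forall>t\<ge>t0. norm (S t y) \<le> R0" if B: "bounded B" for B
  proof -
    obtain M where M: "\<And>y. y \<in> B \<Longrightarrow> energy y 0 \<le> M"
      using initial_energy_bounded[OF B] by blast
    obtain n where "M / \<rho>0 < (4/3) ^ n"
      using real_arch_pow[of "4/3" "M / \<rho>0"] by auto
    then have "M \<le> (4/3) ^ n * \<rho>0"
      using \<rho>0_pos by (simp add: field_simps)
    obtain T where "0 \<le> T" and absorbed: "\<forall>y s. 0 \<le> s \<longrightarrow> energy y s \<le> (4/3) ^ n * \<rho>0
        \<longrightarrow> (\<forall>t\<ge>s + T. energy y t < energy_ceiling \<rho>0)"
      using energy_absorbed by blast
    have T: "energy y t < energy_ceiling \<rho>0" if "y \<in> B" "T \<le> t" for y t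
      using absorbed[rule_format, of 0 y t] M[OF that(1)] \<open>M \<le> (4/3) ^ n * \<rho>0\<close> that(2) by simp
    have "norm (S t y) \<le> R0" if "y \<in> B" "T \<le> t" for y t
    proof -
      have "norm (S t y) = sqrt ((norm (S t y))\<^sup>2)"
        by simp
      also have "\<dots> \<le> sqrt (4 * energy_ceiling \<rho>0 + 4 * cP)"
        using norm_le_energy[of t y] T[OF that] by (intro real_sqrt_le_mono) linarith
      finally show ?thesis
        unfolding R0_def by linarith
    qed
    then show ?thesis
      using \<open>0 \<le> T\<close> by blast
  qed
  moreover have "0 < R0"
    unfolding R0_def energy_ceiling_def using \<rho>0_pos cP_nonneg by (simp add: add_nonneg_pos)
  ultimately show ?thesis
    by blast
qed

end

theorem mainTheorem9:
  fixes \<iota> :: "'v::{real_inner,complete_space} \<Rightarrow> 'h::{real_inner,complete_space}"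
    and k :: real
    and D :: "'v \<Rightarrow> ('v \<Rightarrow>\<^sub>L real)"
    and F N :: "'v \<Rightarrow> 'h"
    and Pi0 Pi1 :: "'v \<Rightarrow> real"
    and Pi' :: "'v \<Rightarrow> ('v \<Rightarrow>\<^sub>L real)"
    and S :: "real \<Rightarrow> 'v \<times> 'h \<Rightarrow> 'v \<times> 'h"
    and \<gamma> :: real
  \<comment> \<open>the operator A (via D(A^{1/2}) and its embedding into H_0)\<close>
  assumes emb_lin: "bounded_linear \<iota>"
    and emb_inj: "inj \<iota>"
    and emb_dense: "closure (range \<iota>) = UNIV"
    and k_pos: "k > 0"
  \<comment> \<open>(AB1)(i)\<close>
    and D_mono: "\<forall>u v. 0 \<le> blinfun_apply (D u) (u - v) - blinfun_apply (D v) (u - v)"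
    and D_hemi: "\<forall>u v w. continuous_on UNIV (\<lambda>s::real. blinfun_apply (D (u + s *\<^sub>R v)) w)"
    and D_zero: "D 0 = 0"
  \<comment> \<open>(AB1)(ii)\<close>
    and F_loclip: "\<forall>R. \<exists>L. \<forall>x y. norm x \<le> R \<longrightarrow> norm y \<le> R \<longrightarrow> norm (F x - F y) \<le> L * norm (x - y)"
    and Pi_deriv: "\<forall>u. ((\<lambda>x. Pi0 x + Pi1 x) has_derivative blinfun_apply (Pi' u)) (at u)"
    and Pi_C1: "continuous_on UNIV Pi'"
    and F_decomp: "\<forall>u w. inner (F u) (\<iota> w) = - blinfun_apply (Pi' u) w + inner (N u) (\<iota> w)"
    and Pi0_nonneg: "\<forall>u. 0 \<le> Pi0 u"
    and Pi0_bdd: "\<forall>R. \<exists>C. \<forall>u. norm u \<le> R \<longrightarrow> Pi0 u \<le> C"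
    and Pi1_bound: "\<forall>\<eta>>0. \<exists>c\<ge>0. \<forall>u. \<bar>Pi1 u\<bar> \<le> \<eta> * ((norm u)\<^sup>2 + Pi0 u) + c"
  \<comment> \<open>(AB1)(iii)\<close>
    and N_bound: "\<exists>c1>0. \<exists>c2>0. \<exists>k0. 0 \<le> k0 \<and> k0 < k \<and>
        (\<forall>u v. inner (N u) (\<iota> v) \<le> c1 + c2 * ((norm u)\<^sup>2 + (norm (\<iota> v))\<^sup>2 + Pi0 u)
                                   + k0 * blinfun_apply (D v) v)"
  \<comment> \<open>well-posedness: S is a (continuous) dynamical system on H whose trajectories are
      solutions satisfying the energy identity\<close>
    and S_zero: "\<forall>y. S 0 y = y"
    and S_semigroup: "\<forall>t s y. 0 \<le> t \<longrightarrow> 0 \<le> s \<longrightarrow> S (t + s) y = S t (S s y)"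
    and S_cont: "\<forall>t\<ge>0. continuous_on UNIV (S t)"
    and S_sol: "\<forall>y. weak_solution \<iota> k D F (\<lambda>t. fst (S t y)) (\<lambda>t. snd (S t y))"
    and S_energy: "\<forall>y. energy_identity \<iota> k D N Pi0 Pi1 (\<lambda>t. fst (S t y)) (\<lambda>t. snd (S t y))"
  \<comment> \<open>(AB2)\<close>
    and gamma_range: "0 \<le> \<gamma> \<and> \<gamma> < 1"
    and AB2_i: "\<exists>c0\<ge>0. \<exists>c1>0. \<forall>v. (norm (\<iota> v))\<^sup>2 \<le> c0 + c1 * blinfun_apply (D v) v"
    and AB2_ii: "\<exists>\<eta>. 0 \<le> \<eta> \<and> \<eta> < 1 \<and> (\<exists>c2>0. \<exists>c3\<ge>0. \<exists>c4\<ge>0. \<forall>u v.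
        - k * blinfun_apply (D v) u + inner (N u) (\<iota> u)
          \<le> blinfun_apply (Pi' u) u + \<eta> * (norm u)\<^sup>2 - c2 * Pi0 u + c3
             + c4 * (1 + energy_E Pi0 u (\<iota> v)) powr \<gamma> * blinfun_apply (D v) v)"
    and AB2_iii: "\<exists>\<eta> b. 0 \<le> \<eta> \<and> \<eta> < 1 \<and> mono_on {0..} b \<and> continuous_on {0..} b \<and>
        (\<forall>x\<ge>0. 0 \<le> b x) \<and>
        (\<forall>u v \<delta>. 0 < \<delta> \<longrightarrow> \<delta> \<le> 1 \<longrightarrow>
            inner (N u) (\<iota> v) \<le> \<eta> * k * blinfun_apply (D v) v + \<delta> * energy_E Pi0 u (\<iota> v) + b (1 / \<delta>)) \<and>
        (\<gamma> > 0 \<longrightarrow> ((\<lambda>x. x powr (1 - 1 / \<gamma>) * b x) \<longlongrightarrow> 0) at_top)"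
  shows "(\<exists>R0>0. \<forall>B. bounded B \<longrightarrow> (\<exists>t0\<ge>0. \<forall>y\<in>B. \<forall>t\<ge>t0. norm (S t y) \<le> R0))
         \<and> (\<exists>B0. bounded B0 \<and> forward_invariant S B0 \<and> absorbing_set S B0)"
proof -
  obtain c0 c1 where AB2_i': "0 \<le> c0" "0 < c1" "\<forall>v. (norm (\<iota> v))\<^sup>2 \<le> c0 + c1 * D v v"
    using AB2_i by blast
  obtain \<eta>2 c2 c3 c4 where AB2_ii': "0 \<le> \<eta>2" "\<eta>2 < 1" "0 < c2" "0 \<le> c3" "0 \<le> c4"
      "\<forall>u v. - k * D v u + inner (N u) (\<iota> u)
          \<le> Pi' u u + \<eta>2 * (norm u)\<^sup>2 - c2 * Pi0 u + c3 + c4 * (1 + energy_E Pi0 u (\<iota> v)) powr \<gamma> * D v v"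
    using AB2_ii by blast
  obtain \<eta>3 b where AB2_iii': "\<eta>3 < 1" "mono_on {0..} b" "\<forall>x\<ge>0. 0 \<le> b x"
      "\<forall>u v \<delta>. 0 < \<delta> \<longrightarrow> \<delta> \<le> 1 \<longrightarrow>
          inner (N u) (\<iota> v) \<le> \<eta>3 * k * D v v + \<delta> * energy_E Pi0 u (\<iota> v) + b (1 / \<delta>)"
      "0 < \<gamma> \<longrightarrow> ((\<lambda>x. x powr (1 - 1 / \<gamma>) * b x) \<longlongrightarrow> 0) at_top"
    using AB2_iii by blast
  obtain cP where cP: "0 \<le> cP" "\<forall>u. \<bar>Pi1 u\<bar> \<le> 1/4 * ((norm u)\<^sup>2 + Pi0 u) + cP"
    using Pi1_bound[rule_format, of "1/4"] by auto
  interpret damped_wave \<iota> k D F N Pi0 Pi1 Pi' S \<gamma> cP c0 c1 \<eta>2 c2 c3 c4 \<eta>3 b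
  proof (rule damped_wave.intro)
    show "0 \<le> D v v" for v
      using D_mono[rule_format, of v 0] D_zero by simp
    show "\<exists>C. \<forall>x. norm x \<le> R \<longrightarrow> norm (F x) \<le> C" for R
      by (rule bounded_on_balls_if_locally_lipschitz[OF F_loclip])
    show "continuous_on UNIV (\<lambda>x. Pi0 x + Pi1 x)"
      using has_derivative_continuous[OF Pi_deriv[rule_format]] by (intro continuous_at_imp_continuous_on) auto
  qed (fact emb_lin k_pos F_decomp[rule_format] Pi0_nonneg[rule_format] Pi0_bdd[rule_format] cP(1) cP(2)[rule_format]
      S_sol[rule_format] S_zero[rule_format] S_energy[rule_format] conjunct1[OF gamma_range] conjunct2[OF gamma_range]
      AB2_i'(1,2) AB2_i'(3)[rule_format] AB2_ii'(1-5) AB2_ii'(6)[rule_format] AB2_iii'(1,2)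
      AB2_iii'(3,4,5)[rule_format])+
  show ?thesis
    using ultimately_bounded absorbing_set_if_ultimately_bounded[OF S_semigroup] by blast
qed

end
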